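(* Let $B=\bigoplus_{i\in\mathbb{Z}}B_i$ be a $\mathbb{Z}$-graded noetherian normal integral domain of characteristic zero with $e(B)=1$. For each $d\in\Pi^*(B)$ such that $d$ is a unit of $B$: (a) every derivation $\delta:B^{(d)}\to B^{(d)}$ extends uniquely to a derivation $D:B\to B$; (b) every locally nilpotent derivation $\delta:B^{(d)}\to B^{(d)}$ extends uniquely to a locally nilpotent derivation $D:B\to B$.
   Context: $B^{(d)}=\bigoplus_{i\in\mathbb{Z}}B_{di}$. Derivations are not assumed homogeneous. For a $\mathbb{Z}$-graded domain $C$, $e(C)=\gcd\{i\in\mathbb{Z}:C_i\neq0\}$. $\Pi(B)$ is the set of prime numbers $p$ such that $p\mid e(B/\mathfrak{p})$ for some homogeneous prime ideal $\mathfrak{p}$ of $B$ of height $1$; $\Pi^*(B)$ is the set of positive integers $d$ not divisible by any element of $\Pi(B)$. *)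

theory Defs
  imports "HOL-Computational_Algebra.Computational_Algebra" "HOL-Library.Extended_Nat"
begin

definition is_ideal :: "'a::comm_ring_1 set \<Rightarrow> bool" where
  "is_ideal I \<longleftrightarrow> 0 \<in> I \<and> (\<forall>x\<in>I. \<forall>y\<in>I. x + y \<in> I) \<and> (\<forall>x\<in>I. - x \<in> I)
     \<and> (\<forall>r x. x \<in> I \<longrightarrow> r * x \<in> I)"

definition prime_ideal :: "'a::comm_ring_1 set \<Rightarrow> bool" where
  "prime_ideal P \<longleftrightarrow> is_ideal P \<and> P \<noteq> UNIV \<and> (\<forall>a b. a * b \<in> P \<longrightarrow> a \<in> P \<or> b \<in> P)"

definition gen_ideal :: "'a::comm_ring_1 set \<Rightarrow> 'a set" where
  "gen_ideal S = {\<Sum>s\<in>S. r s * s | r. True}"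

definition noetherian :: "'a::comm_ring_1 itself \<Rightarrow> bool" where
  "noetherian _ \<longleftrightarrow> (\<forall>I::'a set. is_ideal I \<longrightarrow> (\<exists>S. finite S \<and> S \<subseteq> I \<and> I = gen_ideal S))"

definition height :: "'a::comm_ring_1 set \<Rightarrow> enat" where
  "height P = Sup {enat n | n. \<exists>q :: nat \<Rightarrow> 'a set. (\<forall>i\<le>n. prime_ideal (q i))
        \<and> (\<forall>i<n. q i \<subset> q (Suc i)) \<and> q n = P}"

definition integral_over :: "'a::idom fract \<Rightarrow> bool" where
  "integral_over x \<longleftrightarrow> (\<exists>p :: 'a poly. lead_coeff p = 1 \<and> poly (map_poly to_fract p) x = 0)"

definition normal_domain :: "'a::idom itself \<Rightarrow> bool" where
  "normal_domain _ \<longleftrightarrow> (\<forall>x :: 'a fract. integral_over x \<longrightarrow> x \<in> range to_fract)"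

definition decomp :: "(int \<Rightarrow> 'a::comm_ring_1 set) \<Rightarrow> 'a \<Rightarrow> (int \<Rightarrow> 'a) \<Rightarrow> bool" where
  "decomp G x c \<longleftrightarrow> finite {i. c i \<noteq> 0} \<and> (\<forall>i. c i \<in> G i) \<and> x = (\<Sum>i\<in>{i. c i \<noteq> 0}. c i)"

definition Z_graded :: "(int \<Rightarrow> 'a::comm_ring_1 set) \<Rightarrow> bool" where
  "Z_graded G \<longleftrightarrow>
     (\<forall>i. 0 \<in> G i \<and> (\<forall>x\<in>G i. \<forall>y\<in>G i. x + y \<in> G i) \<and> (\<forall>x\<in>G i. - x \<in> G i))
   \<and> (\<forall>i j. \<forall>x\<in>G i. \<forall>y\<in>G j. x * y \<in> G (i + j))
   \<and> (\<forall>x. \<exists>!c. decomp G x c)"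

definition veronese :: "(int \<Rightarrow> 'a::comm_ring_1 set) \<Rightarrow> nat \<Rightarrow> 'a set" where
  "veronese G d = {x. \<exists>c. decomp G x c \<and> (\<forall>i. \<not> int d dvd i \<longrightarrow> c i = 0)}"

definition e_deg :: "(int \<Rightarrow> 'a::comm_ring_1 set) \<Rightarrow> int" where
  "e_deg G = Gcd {i. G i \<noteq> {0}}"

text \<open>For a homogeneous prime P, (B/P)_i = B_i/(P \<inter> B_i), which is nonzero iff B_i is not contained
  in P; hence e(B/P) = gcd of those i.\<close>
definition e_quot :: "(int \<Rightarrow> 'a::comm_ring_1 set) \<Rightarrow> 'a set \<Rightarrow> int" where
  "e_quot G P = Gcd {i. \<not> G i \<subseteq> P}"

definition homogeneous_ideal :: "(int \<Rightarrow> 'a::comm_ring_1 set) \<Rightarrow> 'a set \<Rightarrow> bool" where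
  "homogeneous_ideal G I \<longleftrightarrow> is_ideal I \<and> (\<forall>x\<in>I. \<forall>c. decomp G x c \<longrightarrow> (\<forall>i. c i \<in> I))"

definition Pi_set :: "(int \<Rightarrow> 'a::comm_ring_1 set) \<Rightarrow> nat set" where
  "Pi_set G = {p. prime p \<and> (\<exists>P. homogeneous_ideal G P \<and> prime_ideal P \<and> height P = 1
                                 \<and> int p dvd e_quot G P)}"

definition Pi_star :: "(int \<Rightarrow> 'a::comm_ring_1 set) \<Rightarrow> nat set" where
  "Pi_star G = {d. d > 0 \<and> (\<forall>p\<in>Pi_set G. \<not> p dvd d)}"

definition derivation_on :: "'a::comm_ring_1 set \<Rightarrow> ('a \<Rightarrow> 'a) \<Rightarrow> bool" where
  "derivation_on A \<delta> \<longleftrightarrow> (\<forall>x\<in>A. \<delta> x \<in> A)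
     \<and> (\<forall>x\<in>A. \<forall>y\<in>A. \<delta> (x + y) = \<delta> x + \<delta> y \<and> \<delta> (x * y) = x * \<delta> y + y * \<delta> x)"

definition locally_nilpotent_on :: "'a::comm_ring_1 set \<Rightarrow> ('a \<Rightarrow> 'a) \<Rightarrow> bool" where
  "locally_nilpotent_on A \<delta> \<longleftrightarrow> (\<forall>x\<in>A. \<exists>n. (\<delta> ^^ n) x = 0)"

end

theory Submission
  imports Defs
begin

text \<open>For homogeneous \<open>x\<close> of degree \<open>i\<close> the power \<open>x\<^sup>d\<close> lies in \<open>B\<^sup>(\<^sup>d\<^sup>)\<close>, so an
  extension \<open>D\<close> of \<open>\<delta>\<close> must satisfy \<open>d x\<^sup>d\<^sup>-\<^sup>1 D x = \<delta> (x\<^sup>d)\<close>. This gives uniqueness, and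
  existence as soon as \<open>x\<^sup>d\<^sup>-\<^sup>1\<close> divides \<open>\<delta> (x\<^sup>d)\<close>, since \<open>d\<close> is a unit. If it did not, an
  ideal \<open>(x\<^sup>d\<^sup>-\<^sup>1B : c)\<close> with homogeneous \<open>c\<close>, maximal among those containing every \<open>w\<^sup>d\<close> with
  \<open>deg w \<equiv> -i (mod d)\<close>, would be a homogeneous associated prime \<open>P\<close> of a principal ideal,
  hence of height one because \<open>B\<close> is noetherian and normal. As \<open>d \<in> \<Pi>\<^sup>*(B)\<close>, \<open>e(B/P)\<close> is
  prime to \<open>d\<close>, so some homogeneous \<open>w \<notin> P\<close> has degree \<open>\<equiv> -i (mod d)\<close>; but then \<open>w\<^sup>d \<in> P\<close>.
  Local nilpotency passes to \<open>D\<close> because the nilpotency degree of \<open>(D\<^sup>k x)\<^sup>d \<in> B\<^sup>(\<^sup>d\<^sup>)\<close>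
  drops by exactly \<open>d\<close> from one \<open>k\<close> to the next.\<close>

lemma is_ideal_zero: "is_ideal I \<Longrightarrow> 0 \<in> I"
  unfolding is_ideal_def by blast

lemma is_ideal_add: "is_ideal I \<Longrightarrow> x \<in> I \<Longrightarrow> y \<in> I \<Longrightarrow> x + y \<in> I"
  unfolding is_ideal_def by blast

lemma is_ideal_uminus: "is_ideal I \<Longrightarrow> x \<in> I \<Longrightarrow> - x \<in> I"
  unfolding is_ideal_def by blast

lemma is_ideal_mult_left: "is_ideal I \<Longrightarrow> x \<in> I \<Longrightarrow> r * x \<in> I"
  unfolding is_ideal_def by blast

lemma is_ideal_mult_right: "is_ideal I \<Longrightarrow> x \<in> I \<Longrightarrow> x * r \<in> I"
  using is_ideal_mult_left[of I x r] by (simp add: mult.commute)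

lemma is_ideal_diff: "is_ideal I \<Longrightarrow> x \<in> I \<Longrightarrow> y \<in> I \<Longrightarrow> x - y \<in> I"
  using is_ideal_add[of I x "- y"] is_ideal_uminus[of I y] by simp

lemma is_ideal_sum: "is_ideal I \<Longrightarrow> (\<And>s. s \<in> S \<Longrightarrow> f s \<in> I) \<Longrightarrow> sum f S \<in> I"
  by (induction S rule: infinite_finite_induct) (auto intro: is_ideal_zero is_ideal_add)

lemma is_ideal_dvd: "is_ideal I \<Longrightarrow> x \<in> I \<Longrightarrow> x dvd y \<Longrightarrow> y \<in> I"
  by (auto elim!: dvdE intro: is_ideal_mult_right)

lemma is_ideal_span: "is_ideal {\<Sum>k\<in>K. r k * b k | r. True}"
  unfolding is_ideal_def
proof (intro conjI ballI allI impI)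
  show "0 \<in> {\<Sum>k\<in>K. r k * b k | r. True}"
    by (auto intro!: exI[of _ "\<lambda>_. 0"])
next
  fix x y assume "x \<in> {\<Sum>k\<in>K. r k * b k | r. True}" "y \<in> {\<Sum>k\<in>K. r k * b k | r. True}"
  then obtain r s where "x = (\<Sum>k\<in>K. r k * b k)" "y = (\<Sum>k\<in>K. s k * b k)" by blast
  then show "x + y \<in> {\<Sum>k\<in>K. r k * b k | r. True}"
    by (intro CollectI exI[of _ "\<lambda>k. r k + s k"]) (simp add: sum.distrib distrib_right)
next
  fix x assume "x \<in> {\<Sum>k\<in>K. r k * b k | r. True}"
  then obtain r where "x = (\<Sum>k\<in>K. r k * b k)" by blast
  then show "- x \<in> {\<Sum>k\<in>K. r k * b k | r. True}"
    by (intro CollectI exI[of _ "\<lambda>k. - r k"]) (simp add: sum_negf)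
next
  fix a x assume "x \<in> {\<Sum>k\<in>K. r k * b k | r. True}"
  then obtain r where "x = (\<Sum>k\<in>K. r k * b k)" by blast
  then show "a * x \<in> {\<Sum>k\<in>K. r k * b k | r. True}"
    by (intro CollectI exI[of _ "\<lambda>k. a * r k"]) (simp add: sum_distrib_left mult.assoc)
qed

lemma gen_ideal_subset: "is_ideal I \<Longrightarrow> S \<subseteq> I \<Longrightarrow> gen_ideal S \<subseteq> I"
  unfolding gen_ideal_def by (auto intro!: is_ideal_sum is_ideal_mult_left)

lemma is_ideal_UN_chain:
  assumes ideal: "\<And>n. is_ideal (I n)" and chain: "\<And>n. I n \<subseteq> I (Suc n)"
  shows "is_ideal (\<Union>n. I n)"
  unfolding is_ideal_def
proof (intro conjI ballI allI impI)
  show "0 \<in> (\<Union>n. I n)" using is_ideal_zero[OF ideal] by blast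
next
  fix x y assume "x \<in> (\<Union>n. I n)" "y \<in> (\<Union>n. I n)"
  then obtain m m' where "x \<in> I m" "y \<in> I m'" by blast
  then have "x \<in> I (max m m')" "y \<in> I (max m m')"
    using lift_Suc_mono_le[of I, OF chain, of m "max m m'"]
      lift_Suc_mono_le[of I, OF chain, of m' "max m m'"] by auto
  then show "x + y \<in> (\<Union>n. I n)" using is_ideal_add[OF ideal] by blast
next
  fix x assume "x \<in> (\<Union>n. I n)"
  then show "- x \<in> (\<Union>n. I n)" using is_ideal_uminus[OF ideal] by blast
next
  fix r x assume "x \<in> (\<Union>n. I n)"
  then show "r * x \<in> (\<Union>n. I n)" using is_ideal_mult_left[OF ideal] by blast
qed

lemma noetherian_chain_stabilizes:
  fixes I :: "nat \<Rightarrow> 'a::comm_ring_1 set"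
  assumes noeth: "noetherian TYPE('a)"
    and ideal: "\<And>n. is_ideal (I n)" and chain: "\<And>n. I n \<subseteq> I (Suc n)"
  shows "\<exists>N. \<forall>m\<ge>N. I m = I N"
proof -
  have mono: "I n \<subseteq> I m" if "n \<le> m" for n m
    using lift_Suc_mono_le[of I, OF chain that] .
  obtain S where S: "finite S" "S \<subseteq> (\<Union>n. I n)" "(\<Union>n. I n) = gen_ideal S"
    using noeth is_ideal_UN_chain[of I, OF ideal chain] unfolding noetherian_def by meson
  have "\<exists>N. S' \<subseteq> I N" if "finite S'" "S' \<subseteq> (\<Union>n. I n)" for S'
    using that
  proof (induction S' rule: finite_induct)
    case (insert s S')
    then obtain N n where "S' \<subseteq> I N" "s \<in> I n" by blast
    then have "insert s S' \<subseteq> I (max N n)"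
      using mono[of N "max N n"] mono[of n "max N n"] by auto
    then show ?case by blast
  qed simp
  then obtain N where "S \<subseteq> I N" using S by blast
  then have "(\<Union>n. I n) \<subseteq> I N" using S(3) gen_ideal_subset[OF ideal] by simp
  then have "I m = I N" if "m \<ge> N" for m using mono[OF that] by blast
  then show ?thesis by blast
qed

lemma noetherian_has_maximal:
  fixes F :: "'a::comm_ring_1 set set"
  assumes noeth: "noetherian TYPE('a)" and "F \<noteq> {}" and ideal: "\<And>I. I \<in> F \<Longrightarrow> is_ideal I"
  obtains M where "M \<in> F" "\<And>J. J \<in> F \<Longrightarrow> M \<subseteq> J \<Longrightarrow> J = M"
proof (rule ccontr)
  assume "\<not> thesis"
  with that have "\<exists>J. J \<in> F \<and> M \<subset> J" if "M \<in> F" for M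
    using \<open>M \<in> F\<close> by blast
  then obtain next_ideal where next_ideal: "\<And>M. M \<in> F \<Longrightarrow> next_ideal M \<in> F \<and> M \<subset> next_ideal M"
    by metis
  obtain I0 where "I0 \<in> F" using \<open>F \<noteq> {}\<close> by blast
  define I where "I n = (next_ideal ^^ n) I0" for n
  have IF: "I n \<in> F" for n
    by (induction n) (simp_all add: I_def \<open>I0 \<in> F\<close> next_ideal)
  have strict: "I n \<subset> I (Suc n)" for n
    using next_ideal[OF IF[of n]] by (simp add: I_def)
  obtain N where "\<forall>m\<ge>N. I m = I N"
    using noetherian_chain_stabilizes[of I, OF noeth ideal[OF IF] psubset_imp_subset[OF strict]] by blast
  then have "I (Suc N) = I N" by (meson le_Suc_eq order_refl)
  then show False using strict[of N] by simp
qed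

lemma prime_ideal_is_ideal: "prime_ideal P \<Longrightarrow> is_ideal P"
  unfolding prime_ideal_def by blast

lemma prime_idealD: "prime_ideal P \<Longrightarrow> a * b \<in> P \<Longrightarrow> a \<in> P \<or> b \<in> P"
  unfolding prime_ideal_def by blast

lemma prime_ideal_one_notin: "prime_ideal P \<Longrightarrow> (1::'a::comm_ring_1) \<notin> P"
  unfolding prime_ideal_def using is_ideal_mult_right[of P 1] by auto

lemma prime_ideal_power_imp: "prime_ideal P \<Longrightarrow> a ^ n \<in> P \<Longrightarrow> a \<in> P"
  by (induction n) (auto simp: prime_ideal_one_notin dest: prime_idealD)

lemma prime_ideal_zero: "prime_ideal {0::'a::idom}"
proof -
  have "{0::'a} \<noteq> UNIV" by (metis UNIV_I singletonD zero_neq_one)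
  then show ?thesis unfolding prime_ideal_def is_ideal_def by auto
qed

section \<open>Primes of height one\<close>

lemma height_eq_oneI:
  fixes P :: "'a::idom set"
  assumes P: "prime_ideal P" "P \<noteq> {0}"
    and minimal: "\<And>Q. prime_ideal Q \<Longrightarrow> Q \<subset> P \<Longrightarrow> Q = {0}"
  shows "height P = 1"
proof -
  define S where "S = {enat n | n. \<exists>q :: nat \<Rightarrow> 'a set. (\<forall>i\<le>n. prime_ideal (q i))
        \<and> (\<forall>i<n. q i \<subset> q (Suc i)) \<and> q n = P}"
  have "x \<le> 1" if "x \<in> S" for x
  proof (rule ccontr)
    assume "\<not> x \<le> 1"
    obtain n q where "x = enat n" and q: "\<forall>i\<le>n. prime_ideal (q i)"
      "\<forall>i<n. q i \<subset> q (Suc i)" "q n = P"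
      using \<open>x \<in> S\<close> unfolding S_def by blast
    then have "n \<ge> 2" using \<open>\<not> x \<le> 1\<close> by (simp add: one_enat_def)
    then obtain k where n: "n = Suc (Suc k)" by (metis add_2_eq_Suc le_Suc_ex)
    have "q (Suc k) \<subset> P" using q n by auto
    moreover have "prime_ideal (q (Suc k))" using q(1) n by simp
    ultimately have q_Suc: "q (Suc k) = {0}" using minimal by blast
    have "0 \<in> q k" using q(1) n by (simp add: is_ideal_zero prime_ideal_is_ideal)
    moreover have "q k \<subset> q (Suc k)" using q(2) n by simp
    then have "q k \<subset> {0}" using q_Suc by simp
    ultimately show False by auto
  qed
  moreover have "1 \<in> S"
  proof -
    define q where "q i = (if i = 0 then {0::'a} else P)" for i :: nat
    have "{0} \<subset> P" using P is_ideal_zero[OF prime_ideal_is_ideal] by blast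
    then have "(\<forall>i\<le>1. prime_ideal (q i)) \<and> (\<forall>i<1. q i \<subset> q (Suc i)) \<and> q 1 = P"
      using P prime_ideal_zero unfolding q_def by (auto simp: le_Suc_eq)
    then show ?thesis unfolding S_def one_enat_def by blast
  qed
  ultimately have "Sup S = 1" by (intro order.antisym) (auto simp: Sup_le_iff intro: Sup_upper)
  then show ?thesis unfolding height_def S_def by simp
qed


lemma fract_poly_sum: "fract_poly (sum f A) = (\<Sum>x\<in>A. fract_poly (f x))"
  by (induction A rule: infinite_finite_induct) simp_all

lemma almost_integral_imp_integral_over:
  fixes g :: "'a::idom"
  assumes noeth: "noetherian TYPE('a)" and "g \<noteq> 0"
    and bounded: "\<And>n. \<exists>b. to_fract g * u ^ n = to_fract b"
  shows "integral_over u"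
proof -
  obtain b where b: "\<And>n. to_fract g * u ^ n = to_fract (b n)"
    using bounded by metis
  define I where "I n = {\<Sum>k\<le>n. r k * b k | r. True}" for n
  have chain: "I n \<subseteq> I (Suc n)" for n
  proof
    fix x assume "x \<in> I n"
    then obtain r where "x = (\<Sum>k\<le>n. r k * b k)" unfolding I_def by blast
    then show "x \<in> I (Suc n)"
      unfolding I_def by (intro CollectI exI[of _ "\<lambda>k. if k \<le> n then r k else 0"]) simp
  qed
  have "is_ideal (I n)" for n
    unfolding I_def by (rule is_ideal_span)
  then obtain N where "\<forall>m\<ge>N. I m = I N"
    using noetherian_chain_stabilizes[OF noeth] chain by blast
  then have "I (Suc N) = I N" by (meson le_Suc_eq order_refl)
  moreover have "b (Suc N) \<in> I (Suc N)"
    unfolding I_def by (intro CollectI exI[of _ "\<lambda>k. if k = Suc N then 1 else 0"]) simp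
  ultimately obtain r where r: "b (Suc N) = (\<Sum>k\<le>N. r k * b k)"
    unfolding I_def by blast
  have "to_fract g * u ^ Suc N = to_fract (b (Suc N))" by (rule b)
  also have "\<dots> = (\<Sum>k\<le>N. to_fract (r k) * (to_fract g * u ^ k))" by (simp add: r b)
  also have "\<dots> = to_fract g * (\<Sum>k\<le>N. to_fract (r k) * u ^ k)"
    by (simp add: sum_distrib_left mult.left_commute)
  finally have root: "u ^ Suc N = (\<Sum>k\<le>N. to_fract (r k) * u ^ k)"
    using \<open>g \<noteq> 0\<close> by simp
  define q where "q = (\<Sum>k\<le>N. monom (r k) k)"
  define p where "p = - q + monom 1 (Suc N)"
  have "degree q < Suc N"
    unfolding q_def by (rule degree_sum_less) (auto intro: le_less_trans[OF degree_monom_le])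
  then have "lead_coeff p = 1"
    unfolding p_def by (subst lead_coeff_add_le) (simp_all add: degree_monom_eq)
  moreover have "poly (map_poly to_fract p) u = 0"
    using root by (simp add: p_def q_def fract_poly_sum map_poly_monom poly_sum poly_monom)
  ultimately show ?thesis unfolding integral_over_def by blast
qed


text \<open>Here \<open>P\<close> becomes principal, generated by \<open>t/w\<close>, after localising at \<open>P\<close>. A nonzero
  \<open>y\<close> in a prime \<open>Q \<subset> P\<close> is then divisible there by every power of \<open>t/w\<close>, which makes the
  ideals \<open>{r. y\<^sub>n dvd w\<^sup>m r}\<close> of the successive quotients \<open>y\<^sub>n\<close> increase forever.\<close>

lemma height_locally_principal_prime:
  fixes P :: "'a::idom set"
  assumes noeth: "noetherian TYPE('a)" and P: "prime_ideal P" "P \<noteq> {0}"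
    and "t \<in> P" and "w \<notin> P" and generates: "\<And>s. s \<in> P \<Longrightarrow> t dvd w * s"
  shows "height P = 1"
proof (rule height_eq_oneI[OF P])
  fix Q assume Q: "prime_ideal Q" "Q \<subset> P"
  show "Q = {0}"
  proof (rule ccontr)
    assume "Q \<noteq> {0}"
    have ideal: "is_ideal Q" using Q(1) by (rule prime_ideal_is_ideal)
    then obtain y where "y \<in> Q" "y \<noteq> 0" using \<open>Q \<noteq> {0}\<close> is_ideal_zero by blast
    have "w \<noteq> 0" using \<open>w \<notin> P\<close> is_ideal_zero[OF prime_ideal_is_ideal[OF P(1)]] by blast
    have "w \<notin> Q" using \<open>w \<notin> P\<close> Q(2) by blast
    have "t \<notin> Q"
    proof
      assume "t \<in> Q"
      have "s \<in> Q" if "s \<in> P" for s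
        using generates[OF that] is_ideal_dvd[OF ideal \<open>t \<in> Q\<close>] prime_idealD[OF Q(1)] \<open>w \<notin> Q\<close>
        by blast
      then show False using Q(2) by blast
    qed
    have "\<exists>z'. z' \<in> Q \<and> w * z = t * z'" if "z \<in> Q" for z
    proof -
      obtain z' where z': "w * z = t * z'" using generates \<open>z \<in> Q\<close> Q(2) by (auto elim!: dvdE)
      then have "t * z' \<in> Q" using is_ideal_mult_left[OF ideal \<open>z \<in> Q\<close>, of w] by simp
      then show ?thesis using z' prime_idealD[OF Q(1)] \<open>t \<notin> Q\<close> by blast
    qed
    then obtain quot where quot: "\<And>z. z \<in> Q \<Longrightarrow> quot z \<in> Q \<and> w * z = t * quot z"
      by metis
    define ys where "ys n = (quot ^^ n) y" for n
    have ys_in: "ys n \<in> Q" for n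
      by (induction n) (simp_all add: ys_def \<open>y \<in> Q\<close> quot)
    have ys_Suc: "w * ys n = t * ys (Suc n)" for n
      using quot[OF ys_in[of n]] by (simp add: ys_def)
    have ys_nonzero: "ys n \<noteq> 0" for n
    proof (induction n)
      case (Suc n)
      then show ?case using ys_Suc[of n] \<open>w \<noteq> 0\<close> by auto
    qed (simp add: ys_def \<open>y \<noteq> 0\<close>)
    define I where "I n = {r. \<exists>m. ys n dvd w ^ m * r}" for n
    have "is_ideal (I n)" for n
      unfolding is_ideal_def I_def
    proof (intro conjI ballI allI impI)
      fix a b assume "a \<in> {r. \<exists>m. ys n dvd w ^ m * r}" "b \<in> {r. \<exists>m. ys n dvd w ^ m * r}"
      then obtain m m' where "ys n dvd w ^ m * a" "ys n dvd w ^ m' * b" by blast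
      then have "ys n dvd w ^ m' * (w ^ m * a) + w ^ m * (w ^ m' * b)" by simp
      then have "ys n dvd w ^ (m + m') * (a + b)" by (simp add: power_add algebra_simps)
      then show "a + b \<in> {r. \<exists>m. ys n dvd w ^ m * r}" by blast
    next
      fix a assume "a \<in> {r. \<exists>m. ys n dvd w ^ m * r}"
      then show "- a \<in> {r. \<exists>m. ys n dvd w ^ m * r}" by simp
    next
      fix r a assume "a \<in> {r. \<exists>m. ys n dvd w ^ m * r}"
      then obtain m where "ys n dvd w ^ m * a" by blast
      then have "ys n dvd w ^ m * (r * a)" by (metis dvd_mult mult.left_commute)
      then show "r * a \<in> {r. \<exists>m. ys n dvd w ^ m * r}" by blast
    qed simp
    moreover have "I n \<subseteq> I (Suc n)" for n
    proof
      fix a assume "a \<in> I n"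
      then obtain m where "ys n dvd w ^ m * a" unfolding I_def by blast
      moreover have "ys (Suc n) dvd w * ys n" using ys_Suc[of n] by simp
      ultimately have "ys (Suc n) dvd w ^ Suc m * a"
        by (metis dvd_trans mult.assoc mult_dvd_mono power_Suc dvd_refl)
      then show "a \<in> I (Suc n)" unfolding I_def by blast
    qed
    ultimately obtain N where "\<forall>m\<ge>N. I m = I N"
      using noetherian_chain_stabilizes[OF noeth] by blast
    then have "I (Suc N) = I N" by (meson le_Suc_eq order_refl)
    moreover have "ys (Suc N) \<in> I (Suc N)" unfolding I_def by (auto intro!: exI[of _ 0])
    ultimately obtain m b where mb: "w ^ m * ys (Suc N) = ys N * b"
      unfolding I_def by (auto elim!: dvdE)
    have "ys N * w ^ Suc m = w ^ m * (w * ys N)" by (simp add: ac_simps)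
    also have "\<dots> = t * (w ^ m * ys (Suc N))" by (simp add: ys_Suc ac_simps)
    also have "\<dots> = ys N * (t * b)" by (simp add: mb ac_simps)
    finally have "w ^ Suc m \<in> P"
      using ys_nonzero[of N] is_ideal_mult_right[OF prime_ideal_is_ideal[OF P(1)] \<open>t \<in> P\<close>] by simp
    then show False using prime_ideal_power_imp[OF P(1)] \<open>w \<notin> P\<close> by blast
  qed
qed

definition colon_ideal :: "'a::comm_ring_1 \<Rightarrow> 'a \<Rightarrow> 'a set" where
  "colon_ideal g c = {r. g dvd r * c}"

lemma is_ideal_colon_ideal: "is_ideal (colon_ideal g c)"
  unfolding is_ideal_def colon_ideal_def
  by (auto simp: distrib_right mult.assoc intro: dvd_add dvd_mult)

lemma height_prime_colon_ideal:
  fixes g c :: "'a::idom"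
  assumes noeth: "noetherian TYPE('a)" and normal: "normal_domain TYPE('a)"
    and "g \<noteq> 0" and "\<not> g dvd c" and prime: "prime_ideal (colon_ideal g c)"
  shows "height (colon_ideal g c) = 1"
proof (cases "\<forall>s\<in>colon_ideal g c. \<exists>s'\<in>colon_ideal g c. s * c = g * s'")
  case True
  define u where "u = to_fract c / to_fract g"
  have "\<exists>s'\<in>colon_ideal g c. to_fract s * u ^ n = to_fract s'" if "s \<in> colon_ideal g c" for s n
    using that
  proof (induction n arbitrary: s)
    case (Suc n)
    obtain s1 where "s1 \<in> colon_ideal g c" "s * c = g * s1" using True Suc.prems by blast
    then obtain s' where "s' \<in> colon_ideal g c" "to_fract s1 * u ^ n = to_fract s'"
      using Suc.IH by blast
    moreover have "to_fract s * u ^ Suc n = to_fract s1 * u ^ n"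
      using \<open>s * c = g * s1\<close> \<open>g \<noteq> 0\<close> unfolding u_def
      by (simp add: field_simps) (metis mult.commute to_fract_mult)
    ultimately show ?case by auto
  qed auto
  moreover have "g \<in> colon_ideal g c" unfolding colon_ideal_def by simp
  ultimately have "\<exists>b. to_fract g * u ^ n = to_fract b" for n by blast
  then have "integral_over u" by (rule almost_integral_imp_integral_over[OF noeth \<open>g \<noteq> 0\<close>])
  then obtain b where "u = to_fract b" using normal unfolding normal_domain_def by blast
  then have "c = g * b" using \<open>g \<noteq> 0\<close> unfolding u_def by (simp add: field_simps flip: to_fract_mult)
  then show ?thesis using \<open>\<not> g dvd c\<close> by simp
next
  case False
  then obtain t where t: "t \<in> colon_ideal g c" and no_quot: "\<forall>s'\<in>colon_ideal g c. t * c \<noteq> g * s'"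
    by blast
  then obtain w where w: "t * c = g * w" unfolding colon_ideal_def by (auto elim: dvdE)
  have "t dvd w * s" if s: "s \<in> colon_ideal g c" for s
  proof -
    obtain s1 where "s * c = g * s1" using s unfolding colon_ideal_def by (auto elim: dvdE)
    then have "g * (w * s) = g * (t * s1)" using w by (metis mult.assoc mult.commute)
    then show ?thesis using \<open>g \<noteq> 0\<close> by simp
  qed
  moreover have "g \<in> colon_ideal g c" unfolding colon_ideal_def by simp
  then have "colon_ideal g c \<noteq> {0}" using \<open>g \<noteq> 0\<close> by blast
  moreover have "w \<notin> colon_ideal g c" using no_quot w by blast
  ultimately show ?thesis using height_locally_principal_prime[OF noeth prime _ t] by blast
qed


section \<open>Homogeneous components\<close>

locale Z_graded_domain =
  fixes G :: "int \<Rightarrow> 'a::idom set"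
  assumes Z_graded: "Z_graded G"
begin

lemma zero_in_grade: "0 \<in> G i"
  using Z_graded unfolding Z_graded_def by blast

lemma grade_add: "x \<in> G i \<Longrightarrow> y \<in> G i \<Longrightarrow> x + y \<in> G i"
  using Z_graded unfolding Z_graded_def by blast

lemma grade_mult: "x \<in> G i \<Longrightarrow> y \<in> G j \<Longrightarrow> x * y \<in> G (i + j)"
  using Z_graded unfolding Z_graded_def by blast

definition hcomp :: "'a \<Rightarrow> int \<Rightarrow> 'a" where
  "hcomp x = (THE c. decomp G x c)"

definition hsupp :: "'a \<Rightarrow> int set" where
  "hsupp x = {i. hcomp x i \<noteq> 0}"

lemma ex1_decomp: "\<exists>!c. decomp G x c"
  using Z_graded unfolding Z_graded_def by blast

lemma decomp_hcomp: "decomp G x (hcomp x)"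
  unfolding hcomp_def using ex1_decomp by (rule theI')

lemma hcomp_eqI: "decomp G x c \<Longrightarrow> hcomp x = c"
  using decomp_hcomp[of x] ex1_decomp[of x] by blast

lemma hcomp_in_grade: "hcomp x i \<in> G i"
  using decomp_hcomp[of x] unfolding decomp_def by blast

lemma finite_hsupp: "finite (hsupp x)"
  using decomp_hcomp[of x] unfolding decomp_def hsupp_def by blast

lemma sum_hcomp:
  assumes "finite F" "hsupp x \<subseteq> F"
  shows "(\<Sum>i\<in>F. hcomp x i) = x"
proof -
  have "(\<Sum>i\<in>F. hcomp x i) = (\<Sum>i\<in>hsupp x. hcomp x i)"
    using assms by (intro sum.mono_neutral_right) (auto simp: hsupp_def)
  also have "\<dots> = x" using decomp_hcomp[of x] unfolding decomp_def hsupp_def by simp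
  finally show ?thesis .
qed

lemma sum_hcomp_hsupp: "(\<Sum>i\<in>hsupp x. hcomp x i) = x"
  by (rule sum_hcomp[OF finite_hsupp order_refl])

lemma decompI:
  assumes "finite F" "\<And>i. c i \<in> G i" "\<And>i. i \<notin> F \<Longrightarrow> c i = 0" "x = (\<Sum>i\<in>F. c i)"
  shows "decomp G x c"
proof -
  have "{i. c i \<noteq> 0} \<subseteq> F" using assms(3) by blast
  then have "finite {i. c i \<noteq> 0}" "(\<Sum>i\<in>F. c i) = (\<Sum>i\<in>{i. c i \<noteq> 0}. c i)"
    using assms(1) finite_subset by (auto intro: sum.mono_neutral_right)
  then show ?thesis unfolding decomp_def using assms by auto
qed

lemma hcomp_homogeneous: "x \<in> G i \<Longrightarrow> hcomp x = (\<lambda>k. if k = i then x else 0)"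
  by (rule hcomp_eqI, rule decompI[where F="{i}"]) (auto intro: zero_in_grade)

lemma hcomp_zero: "hcomp 0 k = 0"
  using hcomp_homogeneous[OF zero_in_grade[of 0]] by simp

lemma hcomp_add: "hcomp (x + y) k = hcomp x k + hcomp y k"
proof -
  have "decomp G (x + y) (\<lambda>k. hcomp x k + hcomp y k)"
  proof (rule decompI[where F="hsupp x \<union> hsupp y"])
    show "x + y = (\<Sum>i\<in>hsupp x \<union> hsupp y. hcomp x i + hcomp y i)"
      by (simp add: sum.distrib sum_hcomp finite_hsupp)
  qed (use finite_hsupp in \<open>auto simp: hsupp_def intro: grade_add hcomp_in_grade\<close>)
  then show ?thesis by (simp add: hcomp_eqI)
qed

lemma hcomp_uminus: "hcomp (- x) k = - hcomp x k"
  using hcomp_add[of x "- x" k] by (simp add: hcomp_zero add_eq_0_iff)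

lemma hcomp_diff: "hcomp (x - y) k = hcomp x k - hcomp y k"
  using hcomp_add[of x "- y" k] by (simp add: hcomp_uminus)

lemma hcomp_sum: "hcomp (sum f F) k = (\<Sum>x\<in>F. hcomp (f x) k)"
  by (induction F rule: infinite_finite_induct) (auto simp: hcomp_zero hcomp_add)

lemma hcomp_mult_homogeneous:
  assumes "w \<in> G j"
  shows "hcomp (w * y) k = w * hcomp y (k - j)"
proof -
  have "decomp G (w * y) (\<lambda>k. w * hcomp y (k - j))"
  proof (rule decompI[where F="(\<lambda>i. i + j) ` hsupp y"])
    show "w * hcomp y (i - j) \<in> G i" for i
      using grade_mult[OF assms hcomp_in_grade, of y "i - j"] by simp
    show "w * hcomp y (i - j) = 0" if "i \<notin> (\<lambda>i. i + j) ` hsupp y" for i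
      using that unfolding hsupp_def by (auto simp: image_iff)
    have "(\<Sum>k\<in>(\<lambda>i. i + j) ` hsupp y. w * hcomp y (k - j)) = (\<Sum>i\<in>hsupp y. w * hcomp y i)"
      by (subst sum.reindex) (auto simp: inj_on_def)
    also have "\<dots> = w * y" by (simp add: sum_distrib_left[symmetric] sum_hcomp_hsupp)
    finally show "w * y = (\<Sum>k\<in>(\<lambda>i. i + j) ` hsupp y. w * hcomp y (k - j))" by simp
  qed (simp add: finite_hsupp)
  then show ?thesis by (simp add: hcomp_eqI)
qed

lemma one_in_grade_zero: "1 \<in> G 0"
proof -
  have "hsupp 1 \<noteq> {}" using sum_hcomp_hsupp[of 1] by force
  then obtain k where k: "hcomp 1 k \<noteq> 0" unfolding hsupp_def by blast
  have "hcomp 1 i = 0" if "i \<noteq> 0" for i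
  proof -
    have "hcomp (hcomp 1 k * 1) (i + k) = hcomp 1 k * hcomp 1 i"
      using hcomp_mult_homogeneous[OF hcomp_in_grade, of 1 k 1] by simp
    moreover have "hcomp (hcomp 1 k * 1) (i + k) = 0"
      using hcomp_homogeneous[OF hcomp_in_grade[of 1 k]] that by simp
    ultimately show ?thesis using k by simp
  qed
  then have "(1::'a) = (\<Sum>i\<in>{0}. hcomp 1 i)"
    by (intro sum_hcomp[symmetric]) (auto simp: hsupp_def)
  then show ?thesis using hcomp_in_grade[of 1 0] by simp
qed

lemma of_nat_in_grade_zero: "of_nat n \<in> G 0"
  by (induction n) (auto intro: zero_in_grade grade_add one_in_grade_zero)

lemma power_in_grade: "x \<in> G i \<Longrightarrow> x ^ n \<in> G (int n * i)"
proof (induction n)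
  case (Suc n)
  then have "x * x ^ n \<in> G (i + int n * i)" by (intro grade_mult)
  then show ?case by (simp add: algebra_simps)
qed (simp add: one_in_grade_zero)

lemma homogeneous_dvd_hcomp:
  assumes "g \<in> G j" and "g dvd y"
  shows "g dvd hcomp y k"
proof -
  obtain b where "y = g * b" using assms(2) by (elim dvdE)
  then show ?thesis using hcomp_mult_homogeneous[OF assms(1)] by simp
qed

lemma homogeneous_idealI:
  "is_ideal P \<Longrightarrow> (\<And>x k. x \<in> P \<Longrightarrow> hcomp x k \<in> P) \<Longrightarrow> homogeneous_ideal G P"
  unfolding homogeneous_ideal_def by (auto dest: hcomp_eqI)

end


section \<open>Homogeneous prime ideals\<close>

lemma submonoid_meets_residue_class:
  fixes S :: "int set" and d :: nat
  assumes "0 \<in> S" and add: "\<And>a b. a \<in> S \<Longrightarrow> b \<in> S \<Longrightarrow> a + b \<in> S"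
    and "coprime (Gcd S) (int d)" and "d > 0"
  shows "\<exists>s\<in>S. int d dvd (s - r)"
proof -
  text \<open>The residues of \<open>S\<close> modulo \<open>d\<close> are closed under subtraction, as \<open>-t \<equiv> (d - 1) t\<close>;
    so they form a group containing \<open>gcd (S \<union> {d}) = 1\<close>.\<close>
  define H where "H = {h. \<exists>s\<in>S. int d dvd (s - h)}"
  have multiple: "int n * s \<in> S" if "s \<in> S" for n s
    by (induction n) (auto simp: \<open>0 \<in> S\<close> distrib_right intro: add that)
  have diff: "a - b \<in> H" if ab: "a \<in> H" "b \<in> H" for a b
  proof -
    obtain s t where "s \<in> S" "int d dvd (s - a)" "t \<in> S" "int d dvd (t - b)"
      using ab unfolding H_def by blast
    then have "int d dvd (s - a) - (t - b) + int d * t" by simp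
    moreover have "s + int (d - 1) * t - (a - b) = (s - a) - (t - b) + int d * t"
      using \<open>d > 0\<close> by (simp add: of_nat_diff algebra_simps)
    ultimately have "int d dvd (s + int (d - 1) * t - (a - b))" by (simp only:)
    moreover have "s + int (d - 1) * t \<in> S"
      using \<open>s \<in> S\<close> \<open>t \<in> S\<close> by (intro add multiple)
    ultimately show ?thesis unfolding H_def by blast
  qed
  have generators: "insert (int d) S \<subseteq> H"
    unfolding H_def using \<open>0 \<in> S\<close> by force
  have "x \<in> H" if "x \<in> group_closure (insert (int d) S)" for x
    using that
    by (induction rule: group_closure.induct) (use diff generators \<open>0 \<in> S\<close> in auto)
  then have "group_closure (insert (int d) S) \<subseteq> H" by blast
  moreover have "Gcd (insert (int d) S) = 1"
    using \<open>coprime (Gcd S) (int d)\<close> by (simp add: Gcd_insert coprime_iff_gcd_eq_1 gcd.commute)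
  ultimately have "1 \<in> H" using Gcd_in_group_closure[of "insert (int d) S"] by auto
  then obtain s where "s \<in> S" "int d dvd (s - 1)" unfolding H_def by blast
  define n where "n = nat (r mod int d)"
  have "int n * s - r = int n * (s - 1) - int d * (r div int d)"
    using \<open>d > 0\<close> by (simp add: n_def algebra_simps minus_mod_eq_mult_div[symmetric])
  then have "int d dvd (int n * s - r)" using \<open>int d dvd (s - 1)\<close> by simp
  then show ?thesis using multiple[OF \<open>s \<in> S\<close>] by blast
qed

context Z_graded_domain
begin

definition supported_below :: "int \<Rightarrow> 'a \<Rightarrow> bool" where
  "supported_below K y \<longleftrightarrow> (\<forall>k\<ge>K. hcomp y k = 0)"

lemma supported_below_add:
  "supported_below K x \<Longrightarrow> supported_below K y \<Longrightarrow> supported_below K (x + y)"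
  by (simp add: supported_below_def hcomp_add)

lemma supported_below_mono: "supported_below K y \<Longrightarrow> K \<le> K' \<Longrightarrow> supported_below K' y"
  by (simp add: supported_below_def)

lemma supported_below_homogeneous_mult:
  "w \<in> G j \<Longrightarrow> supported_below K y \<Longrightarrow> supported_below (K + j) (w * y)"
  by (simp add: supported_below_def hcomp_mult_homogeneous)

lemma supported_below_mult:
  assumes y: "supported_below K y" and z: "supported_below K' z"
  shows "supported_below (K + K' - 1) (y * z)"
proof -
  have "supported_below (K + K' - 1) (hcomp y i * z)" if "i \<in> hsupp y" for i
  proof -
    have "i < K"
    proof (rule ccontr)
      assume "\<not> i < K"
      then have "hcomp y i = 0" using y unfolding supported_below_def by simp
      then show False using that unfolding hsupp_def by simp
    qed
    have "supported_below (K' + i) (hcomp y i * z)"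
      by (rule supported_below_homogeneous_mult[OF hcomp_in_grade z])
    then show ?thesis by (rule supported_below_mono) (use \<open>i < K\<close> in simp)
  qed
  then have "supported_below (K + K' - 1) (\<Sum>i\<in>hsupp y. hcomp y i * z)"
    by (induction "hsupp y" rule: infinite_finite_induct)
      (auto simp: supported_below_def hcomp_zero hcomp_sum)
  then show ?thesis by (simp add: sum_distrib_right[symmetric] sum_hcomp_hsupp)
qed

lemma hcomp_top_split:
  assumes "x \<noteq> 0"
  obtains m where "hcomp x m \<noteq> 0" "supported_below m (x - hcomp x m)"
proof -
  have "hsupp x \<noteq> {}" using assms sum_hcomp_hsupp[of x] by force
  define m where "m = Max (hsupp x)"
  have "m \<in> hsupp x" unfolding m_def using finite_hsupp \<open>hsupp x \<noteq> {}\<close> by (rule Max_in)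
  moreover have "hcomp x k = 0" if "k > m" for k
    using that Max_ge[OF finite_hsupp, of k x] unfolding m_def hsupp_def by force
  ultimately show ?thesis
    using that[of m] hcomp_homogeneous[OF hcomp_in_grade[of x m]]
    by (force simp: hsupp_def supported_below_def hcomp_diff)
qed

lemma homogeneous_ideal_representative:
  assumes "is_ideal P" and homogeneous: "\<And>x k. x \<in> P \<Longrightarrow> hcomp x k \<in> P"
  obtains a' where "a - a' \<in> P" "\<And>k. hcomp a' k \<in> P \<Longrightarrow> hcomp a' k = 0"
proof
  define T where "T = {i. hcomp a i \<notin> P}"
  have "T \<subseteq> hsupp a" using is_ideal_zero[OF \<open>is_ideal P\<close>] by (auto simp: T_def hsupp_def)
  then have "finite T" using finite_hsupp finite_subset by blast
  define a' where "a' = (\<Sum>i\<in>T. hcomp a i)"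
  have "hcomp a' k = (if k \<in> T then hcomp a k else 0)" for k
    using \<open>finite T\<close> unfolding a'_def
    by (simp add: hcomp_sum hcomp_homogeneous[OF hcomp_in_grade] if_distrib[of "\<lambda>f. f k"] cong: if_cong)
  then show "hcomp a' k = 0" if "hcomp a' k \<in> P" for k
    using that by (auto simp: T_def split: if_splits)
  have "a = (\<Sum>i\<in>hsupp a. hcomp a i)" by (simp add: sum_hcomp_hsupp)
  also have "\<dots> = a' + (\<Sum>i\<in>hsupp a - T. hcomp a i)"
    unfolding a'_def using sum.subset_diff[OF \<open>T \<subseteq> hsupp a\<close> finite_hsupp]
    by (metis add.commute)
  finally have "a - a' = (\<Sum>i\<in>hsupp a - T. hcomp a i)" by (simp add: algebra_simps)
  also have "\<dots> \<in> P" by (rule is_ideal_sum[OF \<open>is_ideal P\<close>]) (simp add: T_def)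
  finally show "a - a' \<in> P" .
qed


lemma prime_idealI_homogeneous:
  assumes ideal: "is_ideal P" and "P \<noteq> UNIV"
    and homogeneous: "\<And>x k. x \<in> P \<Longrightarrow> hcomp x k \<in> P"
    and prime_on_homogeneous: "\<And>a b i j. a \<in> G i \<Longrightarrow> b \<in> G j \<Longrightarrow> a * b \<in> P \<Longrightarrow> a \<in> P \<or> b \<in> P"
  shows "prime_ideal P"
proof -
  have "a \<in> P \<or> b \<in> P" if "a * b \<in> P" for a b
  proof (rule ccontr)
    assume "\<not> (a \<in> P \<or> b \<in> P)"
    obtain a' where a': "a - a' \<in> P" "\<And>k. hcomp a' k \<in> P \<Longrightarrow> hcomp a' k = 0"
      using homogeneous_ideal_representative[OF ideal homogeneous] by blast
    obtain b' where b': "b - b' \<in> P" "\<And>k. hcomp b' k \<in> P \<Longrightarrow> hcomp b' k = 0"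
      using homogeneous_ideal_representative[OF ideal homogeneous] by blast
    have "a' \<noteq> 0" "b' \<noteq> 0" using \<open>\<not> (a \<in> P \<or> b \<in> P)\<close> a'(1) b'(1) by auto
    then obtain m n where m: "hcomp a' m \<noteq> 0" "supported_below m (a' - hcomp a' m)"
      and n: "hcomp b' n \<noteq> 0" "supported_below n (b' - hcomp b' n)"
      using hcomp_top_split by metis
    define am bn where "am = hcomp a' m" and "bn = hcomp b' n"
    have am: "am \<in> G m" and bn: "bn \<in> G n" unfolding am_def bn_def by (rule hcomp_in_grade)+
    have "a' * b' = a * b - (a - a') * b - a' * (b - b')" by (simp add: algebra_simps)
    also have "\<dots> \<in> P"
      using is_ideal_mult_right[OF ideal a'(1)] is_ideal_mult_left[OF ideal b'(1)] that
      by (meson ideal is_ideal_diff)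
    finally have "a' * b' \<in> P" .
    text \<open>The top component of \<open>a' * b'\<close> is the product of the top components.\<close>
    have "a' * b' = am * bn + (am * (b' - bn) + ((a' - am) * bn + (a' - am) * (b' - bn)))"
      by (simp add: algebra_simps)
    moreover have "supported_below (m + n)
        (am * (b' - bn) + ((a' - am) * bn + (a' - am) * (b' - bn)))"
    proof (intro supported_below_add)
      show "supported_below (m + n) (am * (b' - bn))"
        using supported_below_homogeneous_mult[OF am n(2)[folded bn_def]] by (simp add: add.commute)
      show "supported_below (m + n) ((a' - am) * bn)"
        using supported_below_homogeneous_mult[OF bn m(2)[folded am_def]] by (simp add: mult.commute)
      show "supported_below (m + n) ((a' - am) * (b' - bn))"
        using supported_below_mult[OF m(2)[folded am_def] n(2)[folded bn_def]]
        by (rule supported_below_mono) simp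
    qed
    ultimately have "hcomp (a' * b') (m + n) = am * bn"
      using hcomp_homogeneous[OF grade_mult[OF am bn]] by (simp add: hcomp_add supported_below_def)
    then have "am * bn \<in> P" using homogeneous[OF \<open>a' * b' \<in> P\<close>, of "m + n"] by simp
    then show False
      using prime_on_homogeneous[OF am bn] a'(2) b'(2) m(1) n(1) unfolding am_def bn_def by blast
  qed
  then show ?thesis unfolding prime_ideal_def using ideal \<open>P \<noteq> UNIV\<close> by blast
qed


text \<open>A colon ideal \<open>(gB : c)\<close> maximal among those with homogeneous \<open>c \<notin> gB\<close> containing \<open>Z\<close>
  is an associated prime of \<open>gB\<close>.\<close>

lemma exists_homogeneous_height_one_prime:
  assumes noeth: "noetherian TYPE('a)" and normal: "normal_domain TYPE('a)"
    and g: "g \<in> G j" "g \<noteq> 0" and c: "c \<in> G k" "\<not> g dvd c" and Z: "Z \<subseteq> colon_ideal g c"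
  shows "\<exists>P. Z \<subseteq> P \<and> homogeneous_ideal G P \<and> prime_ideal P \<and> height P = 1"
proof -
  define F where "F = {colon_ideal g c | c k. c \<in> G k \<and> \<not> g dvd c \<and> Z \<subseteq> colon_ideal g c}"
  have "F \<noteq> {}" using c Z unfolding F_def by blast
  moreover have "\<And>I. I \<in> F \<Longrightarrow> is_ideal I" unfolding F_def using is_ideal_colon_ideal by blast
  ultimately obtain P where "P \<in> F" and maximal: "\<And>J. J \<in> F \<Longrightarrow> P \<subseteq> J \<Longrightarrow> J = P"
    using noetherian_has_maximal[OF noeth] by metis
  then obtain c0 k0 where P: "P = colon_ideal g c0" and c0: "c0 \<in> G k0" "\<not> g dvd c0"
    and "Z \<subseteq> P" unfolding F_def by blast
  have ideal: "is_ideal P" unfolding P by (rule is_ideal_colon_ideal)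
  have "1 \<notin> P" using c0(2) unfolding P colon_ideal_def by simp
  then have "P \<noteq> UNIV" by blast
  have homogeneous: "hcomp r i \<in> P" if "r \<in> P" for r i
  proof -
    have "g dvd hcomp (c0 * r) (i + k0)"
      using that homogeneous_dvd_hcomp[OF g(1)] unfolding P colon_ideal_def by (simp add: mult.commute)
    then show ?thesis using hcomp_mult_homogeneous[OF c0(1)] unfolding P colon_ideal_def
      by (simp add: mult.commute)
  qed
  have "a \<in> P \<or> b \<in> P" if a: "a \<in> G ia" and "b \<in> G ib" and "a * b \<in> P" for a b ia ib
  proof (cases "a \<in> P")
    case False
    have larger: "P \<subseteq> colon_ideal g (a * c0)"
      unfolding P colon_ideal_def by (auto simp: mult.left_commute[of _ a])
    moreover have "\<not> g dvd a * c0" using False unfolding P colon_ideal_def by simp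
    ultimately have "colon_ideal g (a * c0) \<in> F"
      using grade_mult[OF a c0(1)] \<open>Z \<subseteq> P\<close> unfolding F_def by blast
    then have "colon_ideal g (a * c0) = P" using maximal larger by blast
    moreover have "b \<in> colon_ideal g (a * c0)"
      using \<open>a * b \<in> P\<close> unfolding P colon_ideal_def by (simp add: ac_simps)
    ultimately show ?thesis by blast
  qed simp
  then have "prime_ideal P"
    using prime_idealI_homogeneous[OF ideal \<open>P \<noteq> UNIV\<close> homogeneous] by blast
  moreover have "height P = 1"
    using height_prime_colon_ideal[OF noeth normal g(2) c0(2)] \<open>prime_ideal P\<close> unfolding P .
  moreover have "homogeneous_ideal G P" using ideal homogeneous by (rule homogeneous_idealI)
  ultimately show ?thesis using \<open>Z \<subseteq> P\<close> by blast
qed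

lemma exists_homogeneous_notin_prime_of_degree:
  assumes "prime_ideal P" and "coprime (e_quot G P) (int d)" and "d > 0"
  shows "\<exists>w j. w \<in> G j \<and> w \<notin> P \<and> int d dvd (j - r)"
proof -
  define S where "S = {j. \<not> G j \<subseteq> P}"
  have "0 \<in> S" unfolding S_def using one_in_grade_zero prime_ideal_one_notin[OF assms(1)] by blast
  moreover have "a + b \<in> S" if ab: "a \<in> S" "b \<in> S" for a b
  proof -
    obtain u v where "u \<in> G a" "u \<notin> P" "v \<in> G b" "v \<notin> P" using ab unfolding S_def by blast
    then have "u * v \<in> G (a + b)" "u * v \<notin> P"
      using grade_mult prime_idealD[OF assms(1)] by blast+
    then show ?thesis unfolding S_def by blast
  qed
  moreover have "coprime (Gcd S) (int d)" using assms(2) unfolding e_quot_def S_def .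
  ultimately obtain j where "j \<in> S" "int d dvd (j - r)"
    using submonoid_meets_residue_class \<open>d > 0\<close> by blast
  then show ?thesis unfolding S_def by blast
qed

end


context Z_graded_domain
begin

definition deg_class :: "nat \<Rightarrow> int \<Rightarrow> 'a set" where
  "deg_class d r = {b. \<forall>k\<in>hsupp b. int d dvd (k - r)}"

lemma veronese_eq_deg_class: "veronese G d = deg_class d 0"
proof -
  have "x \<in> veronese G d \<longleftrightarrow> (\<forall>i. \<not> int d dvd i \<longrightarrow> hcomp x i = 0)" for x
  proof
    assume "x \<in> veronese G d"
    then obtain c where "decomp G x c" "\<forall>i. \<not> int d dvd i \<longrightarrow> c i = 0"
      unfolding veronese_def by blast
    then show "\<forall>i. \<not> int d dvd i \<longrightarrow> hcomp x i = 0" using hcomp_eqI by blast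
  next
    assume "\<forall>i. \<not> int d dvd i \<longrightarrow> hcomp x i = 0"
    then show "x \<in> veronese G d" unfolding veronese_def using decomp_hcomp by blast
  qed
  then show ?thesis unfolding deg_class_def hsupp_def by auto
qed

lemma deg_class_cong:
  assumes "int d dvd (r - s)"
  shows "deg_class d r = deg_class d s"
proof -
  have "k - s = (k - r) + (r - s)" "k - r = (k - s) - (r - s)" for k by simp_all
  then have "int d dvd (k - r) \<longleftrightarrow> int d dvd (k - s)" for k
    using assms by (metis dvd_add dvd_diff)
  then show ?thesis unfolding deg_class_def by simp
qed

lemma homogeneous_in_deg_class: "x \<in> G k \<Longrightarrow> x \<in> deg_class d k"
  unfolding deg_class_def hsupp_def by (simp add: hcomp_homogeneous)

lemma zero_in_deg_class: "0 \<in> deg_class d r"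
  unfolding deg_class_def hsupp_def by (simp add: hcomp_zero)

lemma deg_class_add: "x \<in> deg_class d r \<Longrightarrow> y \<in> deg_class d r \<Longrightarrow> x + y \<in> deg_class d r"
  unfolding deg_class_def hsupp_def by (auto simp: hcomp_add) (metis add.right_neutral)

lemma deg_class_sum: "(\<And>i. i \<in> F \<Longrightarrow> f i \<in> deg_class d r) \<Longrightarrow> sum f F \<in> deg_class d r"
  by (induction F rule: infinite_finite_induct) (auto intro: zero_in_deg_class deg_class_add)

lemma homogeneous_in_deg_class_cong:
  "x \<in> G k \<Longrightarrow> int d dvd (k - r) \<Longrightarrow> x \<in> deg_class d r"
  using homogeneous_in_deg_class deg_class_cong by blast

lemma deg_class_mult:
  assumes x: "x \<in> deg_class d r" and y: "y \<in> deg_class d s"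
  shows "x * y \<in> deg_class d (r + s)"
proof -
  have "x * y = (\<Sum>i\<in>hsupp x. \<Sum>j\<in>hsupp y. hcomp x i * hcomp y j)"
    by (simp add: sum_product[symmetric] sum_hcomp_hsupp)
  also have "\<dots> \<in> deg_class d (r + s)"
  proof (intro deg_class_sum)
    fix i j assume "i \<in> hsupp x" "j \<in> hsupp y"
    then have "int d dvd (i - r) + (j - s)" using x y unfolding deg_class_def by simp
    then have "int d dvd (i + j - (r + s))" by (simp add: algebra_simps)
    then show "hcomp x i * hcomp y j \<in> deg_class d (r + s)"
      by (rule homogeneous_in_deg_class_cong[OF grade_mult[OF hcomp_in_grade hcomp_in_grade]])
  qed
  finally show ?thesis .
qed

lemma deg_class_power: "x \<in> deg_class d r \<Longrightarrow> x ^ n \<in> deg_class d (int n * r)"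
proof (induction n)
  case (Suc n)
  then have "x * x ^ n \<in> deg_class d (r + int n * r)" by (intro deg_class_mult)
  then show ?case by (simp add: algebra_simps)
qed (simp add: homogeneous_in_deg_class one_in_grade_zero)

lemma deg_class_cancel_homogeneous:
  assumes "w \<in> G j" "w \<noteq> 0" and "w * y \<in> deg_class d s"
  shows "y \<in> deg_class d (s - j)"
  unfolding deg_class_def
proof (intro CollectI ballI)
  fix k assume "k \<in> hsupp y"
  then have "k + j \<in> hsupp (w * y)" using hcomp_mult_homogeneous[OF assms(1)] assms(2)
    by (simp add: hsupp_def)
  then have "int d dvd (k + j - s)" using assms(3) unfolding deg_class_def by blast
  then show "int d dvd (k - (s - j))" by (simp add: algebra_simps)
qed

end


section \<open>Derivations and their nilpotency degree\<close>

lemma derivation_on_closed: "derivation_on A E \<Longrightarrow> x \<in> A \<Longrightarrow> E x \<in> A"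
  unfolding derivation_on_def by blast

lemma derivation_on_add: "derivation_on A E \<Longrightarrow> x \<in> A \<Longrightarrow> y \<in> A \<Longrightarrow> E (x + y) = E x + E y"
  unfolding derivation_on_def by blast

lemma derivation_on_mult:
  "derivation_on A E \<Longrightarrow> x \<in> A \<Longrightarrow> y \<in> A \<Longrightarrow> E (x * y) = x * E y + y * E x"
  unfolding derivation_on_def by blast

lemma derivation_on_zero: "derivation_on A E \<Longrightarrow> 0 \<in> A \<Longrightarrow> E 0 = 0"
  using derivation_on_add[of A E 0 0] by simp

lemma derivation_on_one: "derivation_on A E \<Longrightarrow> 1 \<in> A \<Longrightarrow> E 1 = 0"
  using derivation_on_mult[of A E 1 1] by simp

lemma derivation_on_sum:
  assumes E: "derivation_on A E" and "0 \<in> A" and add: "\<And>x y. x \<in> A \<Longrightarrow> y \<in> A \<Longrightarrow> x + y \<in> A"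
  shows "(\<And>k. k \<in> F \<Longrightarrow> f k \<in> A) \<Longrightarrow> E (sum f F) = (\<Sum>k\<in>F. E (f k))"
proof (induction F rule: infinite_finite_induct)
  case (insert k F)
  have "sum f F' \<in> A" if "F' \<subseteq> insert k F" for F'
    using that insert.prems
    by (induction F' rule: infinite_finite_induct) (auto intro: add \<open>0 \<in> A\<close>)
  then show ?case using insert derivation_on_add[OF E, of "f k" "sum f F"] by auto
qed (simp_all add: derivation_on_zero[OF E \<open>0 \<in> A\<close>])

lemma derivation_sum: "derivation_on UNIV E \<Longrightarrow> E (sum f F) = (\<Sum>k\<in>F. E (f k))"
  using derivation_on_sum[of UNIV E] by simp

lemma derivation_on_power:
  assumes E: "derivation_on A E" and mult: "\<And>x y. x \<in> A \<Longrightarrow> y \<in> A \<Longrightarrow> x * y \<in> A"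
    and "a \<in> A"
  shows "E (a ^ Suc n) = of_nat (Suc n) * a ^ n * E a"
proof (induction n)
  case (Suc n)
  have "a ^ Suc n \<in> A" by (induction n) (simp_all add: \<open>a \<in> A\<close> mult)
  then have "E (a * a ^ Suc n) = a * E (a ^ Suc n) + a ^ Suc n * E a"
    using derivation_on_mult[OF E \<open>a \<in> A\<close>] by blast
  then show ?case using Suc by (simp add: algebra_simps)
qed simp

lemma derivation_of_nat_mult: "derivation_on UNIV E \<Longrightarrow> E (of_nat c * a) = of_nat c * E a"
  by (induction c) (simp_all add: derivation_on_zero derivation_on_add distrib_right)

lemma funpow_derivation_zero: "derivation_on UNIV E \<Longrightarrow> (E ^^ n) 0 = 0"
  by (induction n) (simp_all add: derivation_on_zero)

lemma funpow_derivation_add: "derivation_on UNIV E \<Longrightarrow> (E ^^ n) (a + b) = (E ^^ n) a + (E ^^ n) b"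
  by (induction n) (simp_all add: derivation_on_add)

lemma funpow_derivation_of_nat_mult:
  "derivation_on UNIV E \<Longrightarrow> (E ^^ n) (of_nat c * a) = of_nat c * (E ^^ n) a"
  by (induction n) (simp_all add: derivation_of_nat_mult)

lemma funpow_derivation_eq_0_mono:
  assumes "derivation_on UNIV E" and "(E ^^ n) a = 0" and "n \<le> m"
  shows "(E ^^ m) a = 0"
proof -
  have "(E ^^ m) a = (E ^^ (m - n)) ((E ^^ n) a)"
    using \<open>n \<le> m\<close> by (simp add: funpow_add[symmetric, THEN fun_cong, simplified comp_def])
  then show ?thesis using assms funpow_derivation_zero by simp
qed

lemma locally_nilpotent_sum:
  assumes E: "derivation_on UNIV E" and nilpotent: "\<And>x. x \<in> F \<Longrightarrow> \<exists>n. (E ^^ n) (f x) = 0"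
  shows "\<exists>n. (E ^^ n) (sum f F) = 0"
  using nilpotent
proof (induction F rule: infinite_finite_induct)
  case (insert x F)
  then obtain n m where "(E ^^ n) (f x) = 0" "(E ^^ m) (sum f F) = 0" by blast
  then have "(E ^^ max n m) (f x + sum f F) = 0"
    using funpow_derivation_eq_0_mono[OF E] by (simp add: funpow_derivation_add[OF E])
  then show ?case using insert.hyps by auto
qed (auto intro!: exI[of _ 0])

definition nil_degree :: "('a::comm_ring_1 \<Rightarrow> 'a) \<Rightarrow> 'a \<Rightarrow> nat \<Rightarrow> bool" where
  "nil_degree E a m \<longleftrightarrow> (E ^^ m) a \<noteq> 0 \<and> (E ^^ Suc m) a = 0"

lemma nil_degree_exists:
  assumes "a \<noteq> 0" and "(E ^^ n) a = 0"
  shows "\<exists>m. nil_degree E a m"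
proof -
  define k where "k = (LEAST k. (E ^^ k) a = 0)"
  have "(E ^^ k) a = 0" unfolding k_def using assms(2) by (rule LeastI)
  moreover have "k \<noteq> 0" using \<open>a \<noteq> 0\<close> calculation by (intro notI) simp
  then obtain m where m: "k = Suc m" using not0_implies_Suc by blast
  have "\<not> (E ^^ m) a = 0"
    by (rule not_less_Least[of m "\<lambda>k. (E ^^ k) a = 0"]) (simp add: m[unfolded k_def])
  ultimately show ?thesis unfolding nil_degree_def m by blast
qed

lemma nil_degree_unique:
  assumes E: "derivation_on UNIV E" and "nil_degree E a m" "nil_degree E a m'"
  shows "m = m'"
  using assms funpow_derivation_eq_0_mono[OF E, of "Suc m" a m'] funpow_derivation_eq_0_mono[OF E, of "Suc m'" a m]
  unfolding nil_degree_def by (metis not_less_eq_eq le_antisym)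

lemma nil_degree_derivative: "nil_degree E a (Suc m) \<Longrightarrow> nil_degree E (E a) m"
  unfolding nil_degree_def by (simp add: funpow_Suc_right del: funpow.simps)

lemma nil_degree_of_nat_mult:
  fixes E :: "'a::{idom,ring_char_0} \<Rightarrow> 'a"
  assumes "derivation_on UNIV E" and "c \<noteq> 0"
  shows "nil_degree E (of_nat c * a) m \<longleftrightarrow> nil_degree E a m"
  using assms unfolding nil_degree_def
  by (simp add: funpow_derivation_of_nat_mult[OF assms(1)] del: funpow.simps)


text \<open>The top term of the Leibniz expansion of \<open>E\<^sup>m\<^sup>+\<^sup>n (a * b)\<close>.\<close>

lemma funpow_derivation_mult_top:
  fixes E :: "'a::comm_ring_1 \<Rightarrow> 'a"
  assumes E: "derivation_on UNIV E"
  shows "(E ^^ Suc m) a = 0 \<Longrightarrow> (E ^^ Suc n) b = 0 \<Longrightarrow> (E ^^ Suc (m + n)) (a * b) = 0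
    \<and> (\<exists>C>0. (E ^^ (m + n)) (a * b) = of_nat C * (E ^^ m) a * (E ^^ n) b)"
proof (induction "m + n" arbitrary: m n a b)
  case 0
  then show ?case using derivation_on_mult[OF E, of a b] by (auto intro!: exI[of _ 1])
next
  case (Suc N)
  have Suc_right: "(E ^^ Suc k) x = (E ^^ k) (E x)" for k x
    by (simp only: funpow_Suc_right comp_apply)
  have split: "(E ^^ Suc k) (a * b) = (E ^^ k) (a * E b) + (E ^^ k) (E a * b)" for k
    using derivation_on_mult[OF E, of a b] funpow_derivation_add[OF E]
    by (simp add: Suc_right mult.commute[of b] del: funpow.simps)
  have right: "(E ^^ Suc N) (a * E b) = 0
    \<and> (\<exists>C. (E ^^ N) (a * E b) = of_nat C * (E ^^ m) a * (E ^^ n) b \<and> (n > 0 \<longrightarrow> C > 0))"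
  proof (cases n)
    case 0
    then show ?thesis using Suc.prems(2) funpow_derivation_zero[OF E] derivation_on_zero[OF E]
      by (auto intro!: exI[of _ 0])
  next
    case (Suc n')
    have N: "N = m + n'" using Suc.hyps(2) \<open>n = Suc n'\<close> by simp
    have "(E ^^ Suc n') (E b) = 0" using Suc.prems(2) by (simp only: \<open>n = Suc n'\<close> Suc_right)
    then have "(E ^^ Suc N) (a * E b) = 0
      \<and> (\<exists>C>0. (E ^^ N) (a * E b) = of_nat C * (E ^^ m) a * (E ^^ n') (E b))"
      unfolding N by (rule Suc.hyps(1)[OF N Suc.prems(1)])
    moreover have "(E ^^ n') (E b) = (E ^^ n) b" by (simp only: \<open>n = Suc n'\<close> Suc_right)
    ultimately show ?thesis by auto
  qed
  have left: "(E ^^ Suc N) (E a * b) = 0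
    \<and> (\<exists>C. (E ^^ N) (E a * b) = of_nat C * (E ^^ m) a * (E ^^ n) b \<and> (m > 0 \<longrightarrow> C > 0))"
  proof (cases m)
    case 0
    then show ?thesis using Suc.prems(1) funpow_derivation_zero[OF E] derivation_on_zero[OF E]
      by (auto intro!: exI[of _ 0])
  next
    case (Suc m')
    have N: "N = m' + n" using Suc.hyps(2) \<open>m = Suc m'\<close> by simp
    have "(E ^^ Suc m') (E a) = 0" using Suc.prems(1) by (simp only: \<open>m = Suc m'\<close> Suc_right)
    then have "(E ^^ Suc N) (E a * b) = 0
      \<and> (\<exists>C>0. (E ^^ N) (E a * b) = of_nat C * (E ^^ m') (E a) * (E ^^ n) b)"
      unfolding N by (rule Suc.hyps(1)[OF N _ Suc.prems(2)])
    moreover have "(E ^^ m') (E a) = (E ^^ m) a" by (simp only: \<open>m = Suc m'\<close> Suc_right)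
    ultimately show ?thesis by auto
  qed
  obtain C1 C2 where C1: "(E ^^ N) (a * E b) = of_nat C1 * (E ^^ m) a * (E ^^ n) b" "n > 0 \<longrightarrow> C1 > 0"
    and C2: "(E ^^ N) (E a * b) = of_nat C2 * (E ^^ m) a * (E ^^ n) b" "m > 0 \<longrightarrow> C2 > 0"
    using left right by blast
  have "(E ^^ Suc (Suc N)) (a * b) = 0" using split[of "Suc N"] left right by simp
  moreover have "(E ^^ Suc N) (a * b) = of_nat (C1 + C2) * (E ^^ m) a * (E ^^ n) b"
    using split[of N] C1(1) C2(1) by (simp add: algebra_simps)
  moreover have "C1 + C2 > 0" using C1(2) C2(2) Suc.hyps(2) by auto
  ultimately show ?case using Suc.hyps(2) by (metis add_gr_0)
qed

lemma nil_degree_mult: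
  fixes E :: "'a::{idom,ring_char_0} \<Rightarrow> 'a"
  assumes E: "derivation_on UNIV E" and a: "nil_degree E a m" and b: "nil_degree E b n"
  shows "nil_degree E (a * b) (m + n)"
proof -
  obtain C where "C > 0" "(E ^^ (m + n)) (a * b) = of_nat C * (E ^^ m) a * (E ^^ n) b"
    and "(E ^^ Suc (m + n)) (a * b) = 0"
    using funpow_derivation_mult_top[OF E] a b unfolding nil_degree_def by blast
  then show ?thesis using a b unfolding nil_degree_def by simp
qed

lemma nil_degree_power:
  fixes E :: "'a::{idom,ring_char_0} \<Rightarrow> 'a"
  assumes E: "derivation_on UNIV E" and "nil_degree E a m"
  shows "nil_degree E (a ^ k) (k * m)"
proof (induction k)
  case 0
  then show ?case using derivation_on_one[OF E] by (simp add: nil_degree_def)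
next
  case (Suc k)
  then show ?case using nil_degree_mult[OF E \<open>nil_degree E a m\<close>] by simp
qed

text \<open>Comparing the degrees of \<open>E (y\<^sup>d) = d y\<^sup>d\<^sup>-\<^sup>1 E y\<close> and of
  \<open>(y\<^sup>d\<^sup>-\<^sup>1 E y)\<^sup>d = (y\<^sup>d)\<^sup>d\<^sup>-\<^sup>1 (E y)\<^sup>d\<close> shows that passing from \<open>y\<close> to \<open>E y\<close> lowers
  the degree of the \<open>d\<close>-th power by exactly \<open>d\<close>.\<close>

lemma nil_degree_power_derivative:
  fixes E :: "'a::{idom,ring_char_0} \<Rightarrow> 'a"
  assumes E: "derivation_on UNIV E" and "d > 0" and "E y \<noteq> 0"
    and n: "nil_degree E (y ^ d) n" and n': "nil_degree E (E y ^ d) n'"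
    and m: "nil_degree E (y ^ (d - 1) * E y) m"
  shows "n = n' + d"
proof -
  define u where "u = y ^ (d - 1) * E y"
  have "y \<noteq> 0" using \<open>E y \<noteq> 0\<close> derivation_on_zero[OF E] by auto
  then have "u \<noteq> 0" using \<open>E y \<noteq> 0\<close> by (simp add: u_def)
  have derivative: "E (y ^ d) = of_nat d * u"
    using derivation_on_power[OF E, of y "d - 1"] \<open>d > 0\<close> by (simp add: u_def mult.assoc)
  have "n \<noteq> 0"
  proof
    assume "n = 0"
    then have "E (y ^ d) = 0" using n by (simp add: nil_degree_def)
    then show False using derivative \<open>u \<noteq> 0\<close> \<open>d > 0\<close> by simp
  qed
  then obtain n1 where "n = Suc n1" using not0_implies_Suc by blast
  then have "nil_degree E (of_nat d * u) n1" using nil_degree_derivative[of E "y ^ d" n1] n derivative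
    by simp
  then have "nil_degree E u n1" using nil_degree_of_nat_mult[OF E] \<open>d > 0\<close> by simp
  then have "m = n1" using nil_degree_unique[OF E] m unfolding u_def by blast
  have "u ^ d = (y ^ d) ^ (d - 1) * E y ^ d"
    unfolding u_def by (simp add: power_mult_distrib power_mult[symmetric] mult.commute)
  then have "nil_degree E (u ^ d) ((d - 1) * n + n')"
    using nil_degree_mult[OF E nil_degree_power[OF E n] n'] by simp
  moreover have "nil_degree E (u ^ d) (d * m)" using nil_degree_power[OF E m] unfolding u_def .
  ultimately have "d * m = (d - 1) * n + n'" using nil_degree_unique[OF E] by blast
  then show ?thesis using \<open>m = n1\<close> \<open>n = Suc n1\<close> \<open>d > 0\<close>
    by (cases d) (simp_all add: algebra_simps)
qed


section \<open>Extending a derivation of the Veronese subring\<close>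

locale veronese_derivation = Z_graded_domain G for G :: "int \<Rightarrow> 'a::{idom,ring_char_0} set" +
  fixes d :: nat and \<delta> :: "'a \<Rightarrow> 'a"
  assumes noetherian: "noetherian TYPE('a)" and normal: "normal_domain TYPE('a)"
    and d_Pi_star: "d \<in> Pi_star G" and d_unit: "(of_nat d :: 'a) dvd 1"
    and derivation: "derivation_on (veronese G d) \<delta>"
begin

lemma d_pos: "d > 0"
  using d_Pi_star unfolding Pi_star_def by blast

lemma homogeneous_in_veronese: "x \<in> G k \<Longrightarrow> int d dvd k \<Longrightarrow> x \<in> veronese G d"
  using homogeneous_in_deg_class_cong[of x k d 0] by (simp add: veronese_eq_deg_class)

lemma power_d_in_veronese: "x \<in> G i \<Longrightarrow> x ^ d \<in> veronese G d"
  using homogeneous_in_veronese[OF power_in_grade, of x i d] by simp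

lemma zero_in_veronese: "0 \<in> veronese G d"
  by (simp add: veronese_eq_deg_class zero_in_deg_class)

lemma veronese_add: "x \<in> veronese G d \<Longrightarrow> y \<in> veronese G d \<Longrightarrow> x + y \<in> veronese G d"
  by (simp add: veronese_eq_deg_class deg_class_add)

lemma veronese_mult: "x \<in> veronese G d \<Longrightarrow> y \<in> veronese G d \<Longrightarrow> x * y \<in> veronese G d"
  using deg_class_mult[of x d 0 y 0] by (simp add: veronese_eq_deg_class)

lemma delta_power_d: "a \<in> veronese G d \<Longrightarrow> \<delta> (a ^ d) = of_nat d * a ^ (d - 1) * \<delta> a"
  using derivation_on_power[OF derivation veronese_mult, of a "d - 1"] d_pos by simp

lemma coprime_e_quot:
  assumes "homogeneous_ideal G P" "prime_ideal P" "height P = 1"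
  shows "coprime (e_quot G P) (int d)"
proof (rule ccontr)
  assume "\<not> coprime (e_quot G P) (int d)"
  then obtain c where c: "c dvd e_quot G P" "c dvd int d" "\<not> is_unit c" by (elim not_coprimeE)
  then obtain q where "prime q" "q dvd c" using prime_factor_int[of c] by auto
  define p where "p = nat q"
  have "int p = q" "prime p" using \<open>prime q\<close> by (simp_all add: p_def prime_ge_0_int prime_nat_iff_prime)
  then have "int p dvd int d" "int p dvd e_quot G P" using \<open>q dvd c\<close> c by (auto intro: dvd_trans)
  then have "p dvd d" "int p dvd e_quot G P" by simp_all
  moreover have "p \<in> Pi_set G"
    unfolding Pi_set_def using \<open>prime p\<close> assms calculation(2) by blast
  ultimately show False using d_Pi_star unfolding Pi_star_def by blast
qed

lemma power_pred_dvd_mult_delta: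
  assumes x: "x \<in> G i" and w: "w \<in> G j" and "int d dvd (i + j)"
  shows "x ^ (d - 1) dvd w ^ d * \<delta> (x ^ d)"
proof -
  have xw: "x * w \<in> veronese G d"
    using homogeneous_in_veronese[OF grade_mult[OF x w] \<open>int d dvd (i + j)\<close>] .
  have "x ^ d * \<delta> (w ^ d) + w ^ d * \<delta> (x ^ d) = \<delta> ((x * w) ^ d)"
    using derivation_on_mult[OF derivation power_d_in_veronese[OF x] power_d_in_veronese[OF w]]
    by (simp add: power_mult_distrib)
  also have "\<dots> = of_nat d * (x * w) ^ (d - 1) * \<delta> (x * w)" by (rule delta_power_d[OF xw])
  finally have "w ^ d * \<delta> (x ^ d) = of_nat d * (x * w) ^ (d - 1) * \<delta> (x * w) - x ^ d * \<delta> (w ^ d)"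
    by (simp add: algebra_simps)
  also have "\<dots> = x ^ (d - 1) * (of_nat d * w ^ (d - 1) * \<delta> (x * w) - x * \<delta> (w ^ d))"
    using d_pos by (cases d) (simp_all add: power_mult_distrib algebra_simps)
  finally show ?thesis by simp
qed


lemma power_pred_dvd_delta_power:
  assumes x: "x \<in> G i" "x \<noteq> 0"
  shows "x ^ (d - 1) dvd \<delta> (x ^ d)"
proof (rule ccontr)
  define g f where "g = x ^ (d - 1)" and "f = \<delta> (x ^ d)"
  assume "\<not> x ^ (d - 1) dvd \<delta> (x ^ d)"
  then have "\<not> g dvd (\<Sum>k\<in>hsupp f. hcomp f k)" by (simp add: g_def f_def sum_hcomp_hsupp)
  then obtain k where k: "\<not> g dvd hcomp f k" by (meson dvd_sum)
  have g: "g \<in> G (int (d - 1) * i)" "g \<noteq> 0" unfolding g_def using power_in_grade[OF x(1)] x(2) by simp_all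
  define Z where "Z = {w ^ d | w j. w \<in> G j \<and> int d dvd (i + j)}"
  have "Z \<subseteq> colon_ideal g (hcomp f k)"
  proof
    fix z assume "z \<in> Z"
    then obtain w j where w: "w \<in> G j" "int d dvd (i + j)" and z: "z = w ^ d" unfolding Z_def by blast
    have "z \<in> G (int d * j)" using power_in_grade[OF w(1)] z by simp
    moreover have "g dvd z * f"
      using power_pred_dvd_mult_delta[OF x(1) w] unfolding g_def f_def z .
    ultimately have "g dvd z * hcomp f k"
      using homogeneous_dvd_hcomp[OF g(1), of "z * f" "k + int d * j"] hcomp_mult_homogeneous by simp
    then show "z \<in> colon_ideal g (hcomp f k)" unfolding colon_ideal_def by simp
  qed
  then obtain P where "Z \<subseteq> P" "homogeneous_ideal G P" "prime_ideal P" "height P = 1"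
    using exists_homogeneous_height_one_prime[OF noetherian normal g hcomp_in_grade k] by blast
  then obtain w j where "w \<in> G j" "w \<notin> P" "int d dvd (j - - i)"
    using exists_homogeneous_notin_prime_of_degree coprime_e_quot d_pos by blast
  then have "int d dvd (i + j)" "w \<in> G j" by (simp_all add: add.commute)
  then have "w ^ d \<in> Z" unfolding Z_def by blast
  then have "w ^ d \<in> P" using \<open>Z \<subseteq> P\<close> by blast
  then show False using prime_ideal_power_imp[OF \<open>prime_ideal P\<close>] \<open>w \<notin> P\<close> by blast
qed


text \<open>On a homogeneous \<open>x\<close> any extension must satisfy \<open>d x\<^sup>d\<^sup>-\<^sup>1 D x = \<delta> (x\<^sup>d)\<close>; this
  determines \<open>D x\<close>, which exists because \<open>d\<close> is a unit.\<close>

definition Dhom :: "'a \<Rightarrow> 'a" where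
  "Dhom x = (if x = 0 then 0 else (SOME y. \<delta> (x ^ d) = of_nat d * x ^ (d - 1) * y))"

lemma Dhom_zero: "Dhom 0 = 0"
  by (simp add: Dhom_def)

lemma delta_power_d_Dhom:
  assumes "x \<in> G i"
  shows "\<delta> (x ^ d) = of_nat d * x ^ (d - 1) * Dhom x"
proof (cases "x = 0")
  case True
  then show ?thesis
    using d_pos derivation_on_zero[OF derivation zero_in_veronese] by (simp add: Dhom_zero zero_power)
next
  case False
  obtain b where b: "\<delta> (x ^ d) = x ^ (d - 1) * b"
    using power_pred_dvd_delta_power[OF assms False] by (elim dvdE)
  obtain d' :: 'a where "1 = of_nat d * d'" using d_unit by (elim dvdE)
  then have "\<delta> (x ^ d) = of_nat d * x ^ (d - 1) * (d' * b)" using b by (simp add: ac_simps)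
  then have ex: "\<exists>y. \<delta> (x ^ d) = of_nat d * x ^ (d - 1) * y" by blast
  show ?thesis unfolding Dhom_def using False someI_ex[OF ex] by simp
qed

lemma Dhom_eqI:
  assumes "x \<in> G i" "x \<noteq> 0" and "\<delta> (x ^ d) = of_nat d * x ^ (d - 1) * y"
  shows "Dhom x = y"
  using delta_power_d_Dhom[OF assms(1)] assms(2,3) d_pos by simp

lemma Dhom_veronese: "x \<in> G k \<Longrightarrow> int d dvd k \<Longrightarrow> Dhom x = \<delta> x"
  by (cases "x = 0")
    (simp_all add: Dhom_zero derivation_on_zero[OF derivation zero_in_veronese]
      Dhom_eqI delta_power_d homogeneous_in_veronese)

lemma Dhom_mult:
  assumes x: "x \<in> G i" and y: "y \<in> G j"
  shows "Dhom (x * y) = x * Dhom y + y * Dhom x"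
proof (cases "x = 0 \<or> y = 0")
  case False
  have leibniz: "x ^ d * (c * y ^ (d - 1) * b) + y ^ d * (c * x ^ (d - 1) * a)
      = c * (x * y) ^ (d - 1) * (x * b + y * a)" for a b c
    using d_pos by (cases d) (simp_all add: power_mult_distrib algebra_simps)
  have "\<delta> ((x * y) ^ d) = x ^ d * \<delta> (y ^ d) + y ^ d * \<delta> (x ^ d)"
    unfolding power_mult_distrib
    by (rule derivation_on_mult[OF derivation power_d_in_veronese[OF x] power_d_in_veronese[OF y]])
  also have "\<dots> = of_nat d * (x * y) ^ (d - 1) * (x * Dhom y + y * Dhom x)"
    by (simp only: delta_power_d_Dhom[OF x] delta_power_d_Dhom[OF y] leibniz)
  finally show ?thesis using False by (intro Dhom_eqI[OF grade_mult[OF x y]]) simp_all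
qed (auto simp: Dhom_zero)

lemma Dhom_add:
  assumes x: "x \<in> G i" and y: "y \<in> G i"
  shows "Dhom (x + y) = Dhom x + Dhom y"
proof (cases "x = 0")
  case False
  text \<open>Multiplying by \<open>w = x\<^sup>d\<^sup>-\<^sup>1\<close> moves everything into degrees divisible by \<open>d\<close>,
    where \<open>Dhom\<close> is the additive map \<open>\<delta>\<close>.\<close>
  define w where "w = x ^ (d - 1)"
  have w: "w \<in> G (int (d - 1) * i)" "w \<noteq> 0" unfolding w_def using power_in_grade[OF x] False by simp_all
  have dvd: "int d dvd (i + int (d - 1) * i)" using d_pos by (simp add: of_nat_diff algebra_simps)
  then have key: "w * Dhom z = \<delta> (z * w) - z * Dhom w" if "z \<in> G i" for z
    using Dhom_mult[OF that w(1)] Dhom_veronese[OF grade_mult[OF that w(1)]] by simp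
  have add: "\<delta> ((x + y) * w) = \<delta> (x * w) + \<delta> (y * w)"
    unfolding distrib_right
    using homogeneous_in_veronese[OF grade_mult[OF x w(1)] dvd]
      homogeneous_in_veronese[OF grade_mult[OF y w(1)] dvd]
    by (rule derivation_on_add[OF derivation])
  have "w * Dhom (x + y) = \<delta> ((x + y) * w) - (x + y) * Dhom w" by (rule key[OF grade_add[OF x y]])
  also have "\<dots> = (\<delta> (x * w) - x * Dhom w) + (\<delta> (y * w) - y * Dhom w)"
    unfolding add by (simp add: algebra_simps)
  also have "\<dots> = w * (Dhom x + Dhom y)" by (simp only: distrib_left key[OF x] key[OF y])
  finally show ?thesis using w(2) by simp
qed (simp add: Dhom_zero)

definition D :: "'a \<Rightarrow> 'a" where
  "D b = (\<Sum>k\<in>hsupp b. Dhom (hcomp b k))"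

lemma D_superset: "finite F \<Longrightarrow> hsupp b \<subseteq> F \<Longrightarrow> D b = (\<Sum>k\<in>F. Dhom (hcomp b k))"
  unfolding D_def by (rule sum.mono_neutral_left) (auto simp: hsupp_def Dhom_zero)

lemma D_homogeneous:
  assumes "x \<in> G i"
  shows "D x = Dhom x"
proof -
  have "hsupp x \<subseteq> {i}" using hcomp_homogeneous[OF assms] by (auto simp: hsupp_def)
  then show ?thesis using D_superset[of "{i}" x] by (simp add: hcomp_homogeneous[OF assms])
qed

lemma D_add: "D (a + b) = D a + D b"
proof -
  define F where "F = hsupp a \<union> hsupp b"
  have "finite F" by (simp add: F_def finite_hsupp)
  moreover have "hsupp a \<subseteq> F" "hsupp b \<subseteq> F" "hsupp (a + b) \<subseteq> F"
    by (auto simp: F_def hsupp_def hcomp_add)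
  ultimately have F: "finite F" "hsupp a \<subseteq> F" "hsupp b \<subseteq> F" "hsupp (a + b) \<subseteq> F" by blast+
  have "D (a + b) = (\<Sum>k\<in>F. Dhom (hcomp a k) + Dhom (hcomp b k))"
    using D_superset[OF F(1,4)] by (simp add: hcomp_add Dhom_add[OF hcomp_in_grade hcomp_in_grade])
  then show ?thesis using D_superset[OF F(1,2)] D_superset[OF F(1,3)] by (simp add: sum.distrib)
qed

lemma D_zero: "D 0 = 0"
  by (simp add: D_def hsupp_def hcomp_zero)

lemma D_sum: "D (sum f F) = (\<Sum>x\<in>F. D (f x))"
  by (induction F rule: infinite_finite_induct) (simp_all add: D_zero D_add)

lemma D_eq_sum_hcomp: "D b = (\<Sum>k\<in>hsupp b. D (hcomp b k))"
  unfolding D_def[of b] by (simp add: D_homogeneous[OF hcomp_in_grade])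

lemma D_mult_homogeneous:
  assumes u: "u \<in> G i"
  shows "D (u * b) = u * D b + b * D u"
proof -
  have "D (u * b) = D (\<Sum>j\<in>hsupp b. u * hcomp b j)"
    by (simp add: sum_distrib_left[symmetric] sum_hcomp_hsupp)
  also have "\<dots> = (\<Sum>j\<in>hsupp b. D (u * hcomp b j))" by (rule D_sum)
  also have "\<dots> = (\<Sum>j\<in>hsupp b. u * Dhom (hcomp b j) + hcomp b j * Dhom u)"
    by (simp add: D_homogeneous[OF grade_mult[OF u hcomp_in_grade]] Dhom_mult[OF u hcomp_in_grade])
  also have "\<dots> = u * D b + b * D u"
    by (simp add: sum.distrib sum_distrib_left sum_distrib_right[symmetric] sum_hcomp_hsupp
      D_def[of b] D_homogeneous[OF u])
  finally show ?thesis .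
qed

lemma derivation_D: "derivation_on UNIV D"
proof -
  have "D (a * b) = a * D b + b * D a" for a b
  proof -
    have "D (a * b) = D (\<Sum>i\<in>hsupp a. hcomp a i * b)"
      by (simp add: sum_distrib_right[symmetric] sum_hcomp_hsupp)
    also have "\<dots> = (\<Sum>i\<in>hsupp a. D (hcomp a i * b))" by (rule D_sum)
    also have "\<dots> = (\<Sum>i\<in>hsupp a. hcomp a i * D b + b * D (hcomp a i))"
      by (simp add: D_mult_homogeneous[OF hcomp_in_grade])
    also have "\<dots> = a * D b + b * D a"
      by (simp add: sum.distrib sum_distrib_left sum_distrib_right[symmetric] sum_hcomp_hsupp
        D_eq_sum_hcomp[of a])
    finally show ?thesis .
  qed
  then show ?thesis unfolding derivation_on_def by (simp add: D_add)
qed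

lemma D_extends: "x \<in> veronese G d \<Longrightarrow> D x = \<delta> x"
proof -
  assume x: "x \<in> veronese G d"
  then have "int d dvd k" if "k \<in> hsupp x" for k
    using that by (simp add: veronese_eq_deg_class deg_class_def)
  then have "D x = (\<Sum>k\<in>hsupp x. \<delta> (hcomp x k))"
    unfolding D_def by (simp add: Dhom_veronese[OF hcomp_in_grade])
  also have "\<dots> = \<delta> (\<Sum>k\<in>hsupp x. hcomp x k)"
    using derivation_on_sum[OF derivation zero_in_veronese veronese_add, where F="hsupp x" and f="hcomp x"]
      homogeneous_in_veronese[OF hcomp_in_grade] \<open>\<And>k. k \<in> hsupp x \<Longrightarrow> int d dvd k\<close>
    by simp
  finally show ?thesis by (simp add: sum_hcomp_hsupp)
qed

lemma derivation_extension_unique: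
  assumes D1: "derivation_on UNIV D1" and D2: "derivation_on UNIV D2"
    and agree: "\<And>x. x \<in> veronese G d \<Longrightarrow> D1 x = D2 x"
  shows "D1 = D2"
proof
  have homogeneous: "D1 x = D2 x" if "x \<in> G i" for x i
  proof (cases "x = 0")
    case False
    have "of_nat d * x ^ (d - 1) * D1 x = D1 (x ^ d)"
      using derivation_on_power[OF D1, of x "d - 1"] d_pos by simp
    also have "\<dots> = D2 (x ^ d)" using agree power_d_in_veronese[OF that] by blast
    also have "\<dots> = of_nat d * x ^ (d - 1) * D2 x"
      using derivation_on_power[OF D2, of x "d - 1"] d_pos by simp
    finally show ?thesis using False d_pos by simp
  qed (simp add: derivation_on_zero[OF D1] derivation_on_zero[OF D2])
  fix b
  have "D1 b = (\<Sum>k\<in>hsupp b. D1 (hcomp b k))"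
    using derivation_sum[OF D1, of "hcomp b" "hsupp b"] by (simp add: sum_hcomp_hsupp)
  also have "\<dots> = (\<Sum>k\<in>hsupp b. D2 (hcomp b k))" by (simp add: homogeneous[OF hcomp_in_grade])
  also have "\<dots> = D2 b"
    using derivation_sum[OF D2, of "hcomp b" "hsupp b"] by (simp add: sum_hcomp_hsupp)
  finally show "D1 b = D2 b" .
qed


lemma power_pred_mult_in_veronese:
  "y \<in> deg_class d i \<Longrightarrow> z \<in> deg_class d i \<Longrightarrow> y ^ (d - 1) * z \<in> veronese G d"
proof -
  assume "y \<in> deg_class d i" "z \<in> deg_class d i"
  then have "y ^ (d - 1) * z \<in> deg_class d (int (d - 1) * i + i)"
    by (intro deg_class_mult deg_class_power)
  moreover have "int (d - 1) * i + i = int d * i" using d_pos by (simp add: of_nat_diff algebra_simps)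
  ultimately show ?thesis using deg_class_cong[of d "int d * i" 0] by (simp add: veronese_eq_deg_class)
qed

lemma deg_class_power_d_in_veronese: "y \<in> deg_class d i \<Longrightarrow> y ^ d \<in> veronese G d"
  using power_pred_mult_in_veronese[of y i y] d_pos by (simp add: power_eq_if mult.commute split: if_splits)

lemma D_homogeneous_in_deg_class:
  assumes x: "x \<in> G i"
  shows "D x \<in> deg_class d i"
proof (cases "x = 0")
  case False
  define w where "w = of_nat d * x ^ (d - 1)"
  have "w \<in> G (0 + int (d - 1) * i)"
    unfolding w_def by (rule grade_mult[OF of_nat_in_grade_zero power_in_grade[OF x]])
  moreover have "w \<noteq> 0" unfolding w_def using False d_pos by simp
  ultimately have w: "w \<in> G (int (d - 1) * i)" "w \<noteq> 0" by simp_all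
  have "w * D x = \<delta> (x ^ d)" unfolding w_def using delta_power_d_Dhom[OF x] D_homogeneous[OF x] by simp
  also have "\<dots> \<in> deg_class d 0"
    using derivation_on_closed[OF derivation power_d_in_veronese[OF x]] by (simp add: veronese_eq_deg_class)
  finally have "D x \<in> deg_class d (0 - int (d - 1) * i)" by (rule deg_class_cancel_homogeneous[OF w])
  moreover have "int d dvd (0 - int (d - 1) * i - i)" using d_pos by (simp add: of_nat_diff algebra_simps)
  ultimately show ?thesis using deg_class_cong by blast
qed (simp add: D_zero zero_in_deg_class)

lemma funpow_D_deg_class: "b \<in> deg_class d r \<Longrightarrow> (D ^^ n) b \<in> deg_class d r"
proof (induction n)
  case (Suc n)
  then have "int d dvd (k - r)" if "k \<in> hsupp ((D ^^ n) b)" for k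
    using that unfolding deg_class_def by blast
  then have "D (hcomp ((D ^^ n) b) k) \<in> deg_class d r" if "k \<in> hsupp ((D ^^ n) b)" for k
    using that D_homogeneous_in_deg_class[OF hcomp_in_grade] deg_class_cong by blast
  then show ?case by (simp add: D_eq_sum_hcomp[of "(D ^^ n) b"] deg_class_sum)
qed simp

lemma funpow_D_veronese: "a \<in> veronese G d \<Longrightarrow> (D ^^ n) a = (\<delta> ^^ n) a"
proof (induction n)
  case (Suc n)
  have "(D ^^ n) a \<in> veronese G d"
    using funpow_D_deg_class Suc.prems by (simp add: veronese_eq_deg_class)
  then show ?case using Suc D_extends by simp
qed simp

lemma locally_nilpotent_D_homogeneous:
  assumes nilpotent: "locally_nilpotent_on (veronese G d) \<delta>" and x: "x \<in> G i" "x \<noteq> 0"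
  shows "\<exists>n. (D ^^ n) x = 0"
proof -
  have degree: "\<exists>m. nil_degree D a m" if "a \<in> veronese G d" "a \<noteq> 0" for a
    using that nilpotent funpow_D_veronese nil_degree_exists
    unfolding locally_nilpotent_on_def by metis
  define y where "y k = (D ^^ k) x" for k
  have y_Suc: "y (Suc k) = D (y k)" for k by (simp add: y_def)
  have y_class: "y k \<in> deg_class d i" for k
    unfolding y_def by (rule funpow_D_deg_class[OF homogeneous_in_deg_class[OF x(1)]])
  obtain N where N: "nil_degree D (x ^ d) N"
    using degree[OF power_d_in_veronese[OF x(1)]] x(2) by auto
  have "y k \<noteq> 0 \<longrightarrow> nil_degree D (y k ^ d) (N - k * d) \<and> k * d \<le> N" for k
  proof (induction k)
    case (Suc k)
    show ?case
    proof
      assume "y (Suc k) \<noteq> 0"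
      then have "y k \<noteq> 0" using y_Suc derivation_on_zero[OF derivation_D] by auto
      then have IH: "nil_degree D (y k ^ d) (N - k * d)" "k * d \<le> N" using Suc.IH by auto
      obtain n' where n': "nil_degree D (y (Suc k) ^ d) n'"
        using degree[OF deg_class_power_d_in_veronese[OF y_class]] \<open>y (Suc k) \<noteq> 0\<close> by auto
      obtain m where "nil_degree D (y k ^ (d - 1) * D (y k)) m"
        using degree[OF power_pred_mult_in_veronese[OF y_class y_class, of k "Suc k"]]
          \<open>y k \<noteq> 0\<close> \<open>y (Suc k) \<noteq> 0\<close> y_Suc by auto
      then have "N - k * d = n' + d"
        using nil_degree_power_derivative[OF derivation_D d_pos _ IH(1)] n' y_Suc \<open>y (Suc k) \<noteq> 0\<close>
        by simp
      moreover have "Suc k * d = k * d + d" by simp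
      ultimately have "N - Suc k * d = n'" "Suc k * d \<le> N" using IH(2) by linarith+
      then show "nil_degree D (y (Suc k) ^ d) (N - Suc k * d) \<and> Suc k * d \<le> N"
        using n' by simp
    qed
  qed (simp add: y_def N)
  then have "y (Suc N) \<noteq> 0 \<longrightarrow> Suc N * d \<le> N" by blast
  moreover have "Suc N \<le> Suc N * d" using d_pos by (metis One_nat_def Suc_leI mult.right_neutral mult_le_mono2)
  ultimately have "y (Suc N) = 0" by linarith
  then show ?thesis unfolding y_def by blast
qed

lemma locally_nilpotent_D:
  assumes "locally_nilpotent_on (veronese G d) \<delta>"
  shows "locally_nilpotent_on UNIV D"
  unfolding locally_nilpotent_on_def
proof
  fix b
  have "\<exists>n. (D ^^ n) (\<Sum>k\<in>hsupp b. hcomp b k) = 0"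
    using locally_nilpotent_sum[OF derivation_D] locally_nilpotent_D_homogeneous[OF assms hcomp_in_grade]
    by (metis (mono_tags) funpow_0 hsupp_def mem_Collect_eq)
  then show "\<exists>n. (D ^^ n) b = 0" by (simp add: sum_hcomp_hsupp)
qed

lemma ex1_derivation_extension:
  "\<exists>!D'. derivation_on UNIV D' \<and> (\<forall>x\<in>veronese G d. D' x = \<delta> x)"
proof (rule ex1I[of _ D])
  show "derivation_on UNIV D \<and> (\<forall>x\<in>veronese G d. D x = \<delta> x)"
    using derivation_D D_extends by blast
next
  fix D' assume "derivation_on UNIV D' \<and> (\<forall>x\<in>veronese G d. D' x = \<delta> x)"
  then show "D' = D" using derivation_extension_unique[OF _ derivation_D] D_extends by auto
qed

lemma ex1_locally_nilpotent_extension: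
  assumes "locally_nilpotent_on (veronese G d) \<delta>"
  shows "\<exists>!D'. derivation_on UNIV D' \<and> locally_nilpotent_on UNIV D' \<and> (\<forall>x\<in>veronese G d. D' x = \<delta> x)"
  using ex1_derivation_extension locally_nilpotent_D[OF assms] D_extends derivation_D by blast

end

theorem theorem3p2:
  fixes G :: "int \<Rightarrow> 'a::{idom, ring_char_0} set" and d :: nat
  assumes "Z_graded G"
    and "noetherian TYPE('a)"
    and "normal_domain TYPE('a)"
    and "e_deg G = 1"
    and "d \<in> Pi_star G"
    and "(of_nat d :: 'a) dvd 1"
  shows "(\<forall>\<delta>. derivation_on (veronese G d) \<delta> \<longrightarrow>
            (\<exists>!D. derivation_on UNIV D \<and> (\<forall>x\<in>veronese G d. D x = \<delta> x)))
       \<and> (\<forall>\<delta>. derivation_on (veronese G d) \<delta> \<and> locally_nilpotent_on (veronese G d) \<delta> \<longrightarrow>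
            (\<exists>!D. derivation_on UNIV D \<and> locally_nilpotent_on UNIV D
                  \<and> (\<forall>x\<in>veronese G d. D x = \<delta> x)))"
proof (intro conjI allI impI)
  fix \<delta> :: "'a \<Rightarrow> 'a"
  assume "derivation_on (veronese G d) \<delta>"
  then interpret veronese_derivation G d \<delta>
    using assms by unfold_locales auto
  show "\<exists>!D. derivation_on UNIV D \<and> (\<forall>x\<in>veronese G d. D x = \<delta> x)"
    by (rule ex1_derivation_extension)
next
  fix \<delta> :: "'a \<Rightarrow> 'a"
  assume "derivation_on (veronese G d) \<delta> \<and> locally_nilpotent_on (veronese G d) \<delta>"
  then have "derivation_on (veronese G d) \<delta>" "locally_nilpotent_on (veronese G d) \<delta>" by auto
  then interpret veronese_derivation G d \<delta>
    using assms by unfold_locales auto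
  show "\<exists>!D. derivation_on UNIV D \<and> locally_nilpotent_on UNIV D \<and> (\<forall>x\<in>veronese G d. D x = \<delta> x)"
    using \<open>locally_nilpotent_on (veronese G d) \<delta>\<close> by (rule ex1_locally_nilpotent_extension)
qed

end
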